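(* Let $f,g$ satisfy the standing assumptions below and let $\beta>0$. For any $x\in\mathbb{R}^n$, $y\in\mathbb{R}^p$, $$\partial h(x,y)\subseteq\Big\{\big(d_x+J_{A,x}(x,y)d_y+\beta\nabla^2_{xy}g(x,y)\nabla_yg(x,y),\ J_{A,y}(x,y)d_y+\beta\nabla^2_{yy}g(x,y)\nabla_yg(x,y)\big):(d_x,d_y)\in\partial f(x,\mathcal{A}(x,y))\Big\},$$ with equality when $f$ is Clarke regular.
   Context: Standing assumptions. (A1) Constants $M_f,\mu,L_g,Q_g>0$ exist such that: $f:\mathbb{R}^n\times\mathbb{R}^p\to\mathbb{R}$ is $M_f$-Lipschitz; $g$ is twice differentiable with $\nabla^2_{yy}g\succeq\mu I_p$; $\nabla g$ is $L_g$-Lipschitz; $\nabla^2_{yy}g,\nabla^2_{xy}g$ are $Q_g$-Lipschitz; $\nabla^2_{yy}g$ is continuously differentiable ($\nabla^2_{xy}g\in\mathbb{R}^{n\times p}$ has entries $\partial^2g/\partial x_i\partial y_j$). (A2) $f$ is a potential function of a conservative field $\mathcal{D}_f$ with compact convex values of norm at most $M_f$. $\partial$ denotes the Clarke subdifferential. Notation: $H=\nabla^2_{yy}g(x,y)$; $\mathcal{A}(x,y):=y-H^{-1}\nabla_yg(x,y)$; $h(x,y):=f(x,\mathcal{A}(x,y))+\frac\beta2\|\nabla_yg(x,y)\|^2$; $\nabla^3_{xyy}g(x,y)[d]:=\lim_{t\to0}\frac1t(\nabla^2_{xy}g(x,y+td)-\nabla^2_{xy}g(x,y))$, $\nabla^3_{yyy}g(x,y)[d]:=\lim_{t\to0}\frac1t(\nabla^2_{yy}g(x,y+td)-\nabla^2_{yy}g(x,y))$;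 $J_{A,x}(x,y):=-\nabla^2_{xy}g(x,y)H^{-1}+\nabla^3_{xyy}g(x,y)[H^{-1}\nabla_yg(x,y)]H^{-1}$; $J_{A,y}(x,y):=\nabla^3_{yyy}g(x,y)[H^{-1}\nabla_yg(x,y)]H^{-1}$. *)

theory Defs
  imports "HOL-Analysis.Analysis"
begin

definition clarke_dd :: "('a::real_normed_vector \<Rightarrow> real) \<Rightarrow> 'a \<Rightarrow> 'a \<Rightarrow> ereal" where
  "clarke_dd F z d =
     Limsup (nhds z \<times>\<^sub>F at_right (0::real)) (\<lambda>(w, t). ereal ((F (w + t *\<^sub>R d) - F w) / t))"

definition clarke_subdiff :: "('a::real_inner \<Rightarrow> real) \<Rightarrow> 'a \<Rightarrow> 'a set" where
  "clarke_subdiff F z = {v. \<forall>d. ereal (v \<bullet> d) \<le> clarke_dd F z d}"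

definition clarke_regular_at :: "('a::real_normed_vector \<Rightarrow> real) \<Rightarrow> 'a \<Rightarrow> bool" where
  "clarke_regular_at F z \<longleftrightarrow>
     (\<forall>d. ((\<lambda>t. ereal ((F (z + t *\<^sub>R d) - F z) / t)) \<longlongrightarrow> clarke_dd F z d) (at_right 0))"

definition clarke_regular :: "('a::real_normed_vector \<Rightarrow> real) \<Rightarrow> bool" where
  "clarke_regular F \<longleftrightarrow> (\<forall>z. clarke_regular_at F z)"

definition abs_cont_curve :: "(real \<Rightarrow> 'a::metric_space) \<Rightarrow> bool" where
  "abs_cont_curve \<gamma> \<longleftrightarrow>
    (\<forall>e>0. \<exists>\<delta>>0. \<forall>(k::nat) (a::nat \<Rightarrow> real) b.
       (\<forall>i<k. 0 \<le> a i \<and> a i \<le> b i \<and> b i \<le> 1) \<and>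
       (\<forall>i<k. \<forall>j<k. i \<noteq> j \<longrightarrow> b i \<le> a j \<or> b j \<le> a i) \<and>
       (\<Sum>i<k. b i - a i) < \<delta>
       \<longrightarrow> (\<Sum>i<k. dist (\<gamma> (b i)) (\<gamma> (a i))) < e)"

definition conservative_field :: "('a::euclidean_space \<Rightarrow> 'a set) \<Rightarrow> bool" where
  "conservative_field D \<longleftrightarrow>
     closed {(z, v). v \<in> D z} \<and> (\<forall>z. D z \<noteq> {} \<and> compact (D z)) \<and>
     (\<forall>\<gamma>. abs_cont_curve \<gamma> \<and> \<gamma> 0 = \<gamma> 1 \<longrightarrow>
        (LINT t:{0..1}|lborel. Sup ((\<lambda>v. vector_derivative \<gamma> (at t) \<bullet> v) ` D (\<gamma> t))) = 0)"

definition potential_of :: "('a::euclidean_space \<Rightarrow> real) \<Rightarrow> ('a \<Rightarrow> 'a set) \<Rightarrow> bool" where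
  "potential_of F D \<longleftrightarrow> conservative_field D \<and>
     (\<forall>\<gamma>. abs_cont_curve \<gamma> \<longrightarrow>
        F (\<gamma> 1) - F (\<gamma> 0) =
        (LINT t:{0..1}|lborel. Sup ((\<lambda>v. vector_derivative \<gamma> (at t) \<bullet> v) ` D (\<gamma> t))))"

definition grad_x :: "((real^'n) \<times> (real^'p) \<Rightarrow> real) \<Rightarrow> (real^'n) \<times> (real^'p) \<Rightarrow> real^'n" where
  "grad_x g z = (\<chi> i. frechet_derivative g (at z) (axis i 1, 0))"

definition grad_y :: "((real^'n) \<times> (real^'p) \<Rightarrow> real) \<Rightarrow> (real^'n) \<times> (real^'p) \<Rightarrow> real^'p" where
  "grad_y g z = (\<chi> j. frechet_derivative g (at z) (0, axis j 1))"

text \<open>Hessian block in y: (i,j) entry is d^2 g / dy_i dy_j.\<close>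
definition hess_yy :: "((real^'n) \<times> (real^'p) \<Rightarrow> real) \<Rightarrow> (real^'n) \<times> (real^'p) \<Rightarrow> real^'p^'p" where
  "hess_yy g z = (\<chi> i j. frechet_derivative (\<lambda>w. grad_y g w $ j) (at z) (0, axis i 1))"

text \<open>Mixed block, an n x p matrix: (i,j) entry is d^2 g / dx_i dy_j.\<close>
definition hess_xy :: "((real^'n) \<times> (real^'p) \<Rightarrow> real) \<Rightarrow> (real^'n) \<times> (real^'p) \<Rightarrow> real^'p^'n" where
  "hess_xy g z = (\<chi> i j. frechet_derivative (\<lambda>w. grad_y g w $ j) (at z) (axis i 1, 0))"

definition ddir_y :: "((real^'n) \<times> (real^'p) \<Rightarrow> 'm::real_normed_vector) \<Rightarrow> (real^'n) \<times> (real^'p) \<Rightarrow> real^'p \<Rightarrow> 'm" where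
  "ddir_y M z d = Lim (at (0::real)) (\<lambda>t. (1 / t) *\<^sub>R (M (fst z, snd z + t *\<^sub>R d) - M z))"

definition Amap :: "((real^'n) \<times> (real^'p) \<Rightarrow> real) \<Rightarrow> (real^'n) \<times> (real^'p) \<Rightarrow> real^'p" where
  "Amap g z = snd z - matrix_inv (hess_yy g z) *v grad_y g z"

definition hfun :: "((real^'n) \<times> (real^'p) \<Rightarrow> real) \<Rightarrow> ((real^'n) \<times> (real^'p) \<Rightarrow> real) \<Rightarrow> real
                     \<Rightarrow> (real^'n) \<times> (real^'p) \<Rightarrow> real" where
  "hfun f g \<beta> z = f (fst z, Amap g z) + \<beta> / 2 * (norm (grad_y g z))\<^sup>2"

definition JAx :: "((real^'n) \<times> (real^'p) \<Rightarrow> real) \<Rightarrow> (real^'n) \<times> (real^'p) \<Rightarrow> real^'p^'n" where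
  "JAx g z = - (hess_xy g z ** matrix_inv (hess_yy g z))
             + ddir_y (hess_xy g) z (matrix_inv (hess_yy g z) *v grad_y g z) ** matrix_inv (hess_yy g z)"

definition JAy :: "((real^'n) \<times> (real^'p) \<Rightarrow> real) \<Rightarrow> (real^'n) \<times> (real^'p) \<Rightarrow> real^'p^'p" where
  "JAy g z = ddir_y (hess_yy g) z (matrix_inv (hess_yy g z) *v grad_y g z) ** matrix_inv (hess_yy g z)"

end

theory Submission
  imports Defs
begin

text \<open>For Lipschitz \<open>f\<close> the Clarke directional derivative \<open>f\<degree>(u; \<cdot>)\<close> is finite and sublinear,
  and \<open>\<partial>f(u)\<close> is the set of its linear minorants. The map \<open>\<Phi>(x, y) = (x, A(x, y))\<close> and the
  penalty \<open>s = \<beta>/2 \<parallel>\<nabla>\<^sub>y g\<parallel>\<^sup>2\<close> have strict directional derivatives, hence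
  \<open>h\<degree>(z; d) \<le> f\<degree>(\<Phi> z; \<Phi>'(z) d) + \<nabla>s(z) \<bullet> d\<close>, with equality when \<open>f\<close> is regular.
  The adjoint of \<open>\<Phi>'(z)\<close> is \<open>(I + J\<^sub>A\<^sub>,\<^sub>x, J\<^sub>A\<^sub>,\<^sub>y)\<close>; identifying it requires the symmetry
  of the third derivatives of \<open>g\<close>, obtained from a Schwarz-type lemma. A sublinear function is
  attained by one of its linear minorants (finite-dimensional Hahn--Banach), so separating a point
  from the compact convex set \<open>\<Phi>'(z)\<^sup>T \<partial>f(\<Phi> z) + \<nabla>s(z)\<close> by a hyperplane turns the inequality
  of directional derivatives into the inclusion of subdifferentials, and the reverse inequality
  into equality.\<close>

section \<open>Sublinear functions and their linear minorants\<close>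

definition sublinear :: "('a::real_vector \<Rightarrow> real) \<Rightarrow> bool" where
  "sublinear p \<longleftrightarrow> (\<forall>x y. p (x + y) \<le> p x + p y) \<and> (\<forall>c x. 0 \<le> c \<longrightarrow> p (c *\<^sub>R x) = c * p x)"

lemma sublinearD:
  assumes "sublinear p"
  shows "p (x + y) \<le> p x + p y" and "0 \<le> c \<Longrightarrow> p (c *\<^sub>R x) = c * p x"
  using assms unfolding sublinear_def by blast+

lemma convex_strict_epigraph_sublinear:
  assumes "sublinear p"
  shows "convex {(x, r). p x < r}"
  unfolding convex_def
proof (clarsimp)
  fix x r y s and u v :: real
  assume "p x < r" "p y < s" and u: "0 \<le> u" and v: "0 \<le> v" and "u + v = 1"
  have "p (u *\<^sub>R x + v *\<^sub>R y) \<le> u * p x + v * p y"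
    using sublinearD(1)[OF assms, of "u *\<^sub>R x" "v *\<^sub>R y"] sublinearD(2)[OF assms u, of x]
      sublinearD(2)[OF assms v, of y] by simp
  also have "\<dots> < u * r + v * s"
  proof (cases "u = 0")
    case True
    then show ?thesis using \<open>u + v = 1\<close> \<open>p y < s\<close> by simp
  next
    case False
    then show ?thesis
      using u v \<open>p x < r\<close> \<open>p y < s\<close> by (intro add_less_le_mono mult_strict_left_mono mult_left_mono) auto
  qed
  finally show "p (u *\<^sub>R x + v *\<^sub>R y) < u * r + v * s" .
qed

lemma sublinear_supporting_hyperplane:
  fixes p :: "'a::euclidean_space \<Rightarrow> real"
  assumes "sublinear p"
  shows "\<exists>a \<alpha>. 0 < \<alpha> \<and> (\<forall>x r. p x < r \<longrightarrow> 0 \<le> a \<bullet> (x - e) + \<alpha> * (r - p e))"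
proof -
  define S where "S = (\<lambda>w. w - (e, p e)) ` {(x, r). p x < r}"
  have "convex S"
    unfolding S_def by (rule convex_translation_subtract[OF convex_strict_epigraph_sublinear[OF assms]])
  moreover have "0 \<notin> S" unfolding S_def by (auto simp: zero_prod_def)
  ultimately obtain w where "w \<noteq> 0" and "\<forall>x\<in>S. 0 \<le> w \<bullet> x"
    using separating_hyperplane_set_0 by blast
  moreover obtain a \<alpha> where "w = (a, \<alpha>)" by fastforce
  ultimately have a0: "(a, \<alpha>) \<noteq> 0" and aS: "\<forall>w\<in>S. 0 \<le> (a, \<alpha>) \<bullet> w" by blast+
  have key: "0 \<le> a \<bullet> (x - e) + \<alpha> * (r - p e)" if "p x < r" for x r
  proof -
    have "(x - e, r - p e) \<in> S" unfolding S_def using that by (intro image_eqI[where x="(x, r)"]) auto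
    then have "0 \<le> (a, \<alpha>) \<bullet> (x - e, r - p e)" using aS by blast
    then show ?thesis by (simp add: inner_Pair)
  qed
  have "0 \<le> \<alpha>" using key[of e "p e + 1"] by simp
  moreover have "\<alpha> \<noteq> 0"
  proof
    assume "\<alpha> = 0"
    then have "a \<bullet> a \<le> 0" using key[of "e - a" "p (e - a) + 1"] by simp
    then have "a = 0" by (metis inner_gt_zero_iff not_le)
    then show False using a0 \<open>\<alpha> = 0\<close> by (simp add: zero_prod_def)
  qed
  ultimately have "0 < \<alpha>" by simp
  with key show ?thesis by blast
qed

lemma sublinear_exists_attaining_minorant:
  fixes p :: "'a::euclidean_space \<Rightarrow> real"
  assumes "sublinear p"
  shows "\<exists>\<xi>. \<xi> \<bullet> e = p e \<and> (\<forall>d. \<xi> \<bullet> d \<le> p d)"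
proof -
  obtain a \<alpha> where "0 < \<alpha>" and supp: "\<And>x r. p x < r \<Longrightarrow> 0 \<le> a \<bullet> (x - e) + \<alpha> * (r - p e)"
    using sublinear_supporting_hyperplane[OF assms, of e] by blast
  define \<xi> where "\<xi> = - (1 / \<alpha>) *\<^sub>R a"
  have incr: "\<xi> \<bullet> (x - e) \<le> p x - p e" for x
  proof (rule field_le_epsilon)
    fix \<delta> :: real assume "0 < \<delta>"
    then have "0 \<le> a \<bullet> (x - e) + \<alpha> * (p x + \<delta> - p e)" using supp[of x "p x + \<delta>"] by simp
    then have "- (a \<bullet> (x - e)) / \<alpha> \<le> p x + \<delta> - p e"
      using \<open>0 < \<alpha>\<close> by (simp add: field_simps)
    then show "\<xi> \<bullet> (x - e) \<le> p x - p e + \<delta>" unfolding \<xi>_def by simp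
  qed
  have "p 0 = 0" using sublinearD(2)[OF assms, of 0 0] by simp
  then have "\<xi> \<bullet> e = p e"
    using incr[of 0] incr[of "2 *\<^sub>R e"] sublinearD(2)[OF assms, of 2 e] by (simp add: algebra_simps)
  moreover have "\<xi> \<bullet> d \<le> p d" for d
    using incr[of "e + d"] sublinearD(1)[OF assms, of e d] \<open>\<xi> \<bullet> e = p e\<close> by (simp add: inner_add_right)
  ultimately show ?thesis by blast
qed

lemma convex_minorants: "convex {\<xi>. \<forall>d. \<xi> \<bullet> d \<le> p d}"
proof -
  have "{\<xi>. \<forall>d. \<xi> \<bullet> d \<le> p d} = (\<Inter>d. {\<xi>. d \<bullet> \<xi> \<le> p d})" by (auto simp: inner_commute)
  then show ?thesis by (simp add: convex_INT convex_halfspace_le)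
qed

lemma compact_minorants:
  fixes p :: "'a::euclidean_space \<Rightarrow> real"
  assumes bound: "\<And>x. p x \<le> B * norm x"
  shows "compact {\<xi>. \<forall>d. \<xi> \<bullet> d \<le> p d}"
proof -
  have "{\<xi>. \<forall>d. \<xi> \<bullet> d \<le> p d} = (\<Inter>d. {\<xi>. d \<bullet> \<xi> \<le> p d})" by (auto simp: inner_commute)
  then have "closed {\<xi>. \<forall>d. \<xi> \<bullet> d \<le> p d}" by (simp add: closed_INT closed_halfspace_le)
  moreover have "bounded {\<xi>. \<forall>d. \<xi> \<bullet> d \<le> p d}" unfolding bounded_iff
  proof (intro exI[of _ "max B 0"] ballI)
    fix \<xi> assume "\<xi> \<in> {\<xi>. \<forall>d. \<xi> \<bullet> d \<le> p d}"
    then have "\<xi> \<bullet> \<xi> \<le> B * norm \<xi>" using bound[of \<xi>] order_trans by blast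
    then have "norm \<xi> * norm \<xi> \<le> B * norm \<xi>"
      by (simp add: power2_norm_eq_inner[symmetric] power2_eq_square)
    then show "norm \<xi> \<le> max B 0"
      by (cases "norm \<xi> = 0") (auto simp: mult_le_cancel_right)
  qed
  ultimately show ?thesis by (simp add: compact_eq_bounded_closed)
qed

text \<open>If the support function of \<open>v\<close> is dominated by that of the compact convex set \<open>L' K + c\<close>,
  then \<open>v\<close> lies in it: otherwise a separating hyperplane, evaluated at a minorant attaining \<open>p\<close>
  in the separating direction, gives a contradiction.\<close>
lemma mem_adjoint_image_minorants:
  fixes p :: "'a::euclidean_space \<Rightarrow> real" and L :: "'b::euclidean_space \<Rightarrow> 'a" and L' :: "'a \<Rightarrow> 'b"
  assumes sub: "sublinear p" and bound: "\<And>x. p x \<le> B * norm x"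
    and lin: "linear L'" and adj: "\<And>\<xi> d. L' \<xi> \<bullet> d = \<xi> \<bullet> L d"
    and v: "\<And>d. v \<bullet> d \<le> p (L d) + c \<bullet> d"
  shows "v \<in> (\<lambda>\<xi>. L' \<xi> + c) ` {\<xi>. \<forall>d. \<xi> \<bullet> d \<le> p d}"
proof (rule ccontr)
  define K where "K = (\<lambda>\<xi>. L' \<xi> + c) ` {\<xi>. \<forall>d. \<xi> \<bullet> d \<le> p d}"
  assume "v \<notin> (\<lambda>\<xi>. L' \<xi> + c) ` {\<xi>. \<forall>d. \<xi> \<bullet> d \<le> p d}"
  moreover have "compact K"
    unfolding K_def using lin linear_conv_bounded_linear
    by (intro compact_continuous_image compact_minorants[OF bound] continuous_intros linear_continuous_on)
      blast
  moreover have "convex K"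
  proof -
    have "K = (\<lambda>x. c + x) ` (L' ` {\<xi>. \<forall>d. \<xi> \<bullet> d \<le> p d})"
      unfolding K_def by (auto simp: image_image add.commute)
    then show ?thesis by (simp add: convex_translation convex_linear_image lin convex_minorants)
  qed
  ultimately obtain a b where ab: "a \<bullet> v < b" "\<forall>x\<in>K. b < a \<bullet> x"
    using separating_hyperplane_closed_point[OF _ compact_imp_closed] unfolding K_def by blast
  obtain \<xi> where \<xi>: "\<xi> \<bullet> L (- a) = p (L (- a))" "\<forall>d. \<xi> \<bullet> d \<le> p d"
    using sublinear_exists_attaining_minorant[OF sub] by blast
  then have "b < a \<bullet> (L' \<xi> + c)" using ab(2) unfolding K_def by blast
  also have "a \<bullet> (L' \<xi> + c) = - p (L (- a)) + a \<bullet> c"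
    using adj[of \<xi> "- a"] \<xi>(1) by (simp add: inner_add_right inner_commute)
  also have "\<dots> \<le> a \<bullet> v" using v[of "- a"] by (simp add: inner_commute)
  finally show False using ab(1) by simp
qed

section \<open>Clarke directional derivatives of Lipschitz functions\<close>

abbreviation clarke_filter :: "'a::topological_space \<Rightarrow> ('a \<times> real) filter" where
  "clarke_filter z \<equiv> nhds z \<times>\<^sub>F at_right (0::real)"

definition diff_quot :: "('a::real_normed_vector \<Rightarrow> 'b::real_normed_vector) \<Rightarrow> 'a \<Rightarrow> 'a \<times> real \<Rightarrow> 'b" where
  "diff_quot F d y = (1 / snd y) *\<^sub>R (F (fst y + snd y *\<^sub>R d) - F (fst y))"

lemma clarke_dd_eq_Limsup_diff_quot:
  "clarke_dd F z d = Limsup (clarke_filter z) (\<lambda>y. ereal (diff_quot F d y))"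
  unfolding clarke_dd_def diff_quot_def by (simp add: split_def)

lemma clarke_filter_neq_bot: "clarke_filter z \<noteq> bot"
  by (simp add: prod_filter_eq_bot trivial_limit_at_right_real)

lemma eventually_clarke_filter_pos: "eventually (\<lambda>y. 0 < snd y) (clarke_filter z)"
  using eventually_prodI[of "\<lambda>_. True" "nhds z" "\<lambda>t. t > (0::real)" "at_right 0"]
  by (simp add: eventually_at_right_less)

lemma tendsto_clarke_filter_snd: "(snd \<longlongrightarrow> 0) (clarke_filter z)"
  using filterlim_snd filterlim_at by blast

lemma tendsto_clarke_filter_shift:
  "((\<lambda>y. fst y + snd y *\<^sub>R d) \<longlongrightarrow> z) (clarke_filter (z::'a::real_normed_vector))"
  using tendsto_add[OF filterlim_fst tendsto_scaleR[OF tendsto_clarke_filter_snd tendsto_const]]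
  by simp

lemma filterlim_clarke_filter_rescale:
  assumes "0 < r"
  shows "filterlim (\<lambda>y. (fst y, r * snd y)) (clarke_filter z) (clarke_filter z)"
proof -
  have "filterlim (\<lambda>y. r * snd y) (at_right 0) (clarke_filter z)"
    unfolding filterlim_at
  proof
    show "eventually (\<lambda>y. r * snd y \<in> {0<..} \<and> r * snd y \<noteq> 0) (clarke_filter z)"
      using eventually_clarke_filter_pos[of z] by eventually_elim (use assms in simp)
  qed (rule tendsto_mult_right_zero[OF tendsto_clarke_filter_snd])
  then show ?thesis by (intro filterlim_Pair filterlim_fst)
qed

lemma eventually_less_of_Limsup_less:
  assumes "Limsup F (\<lambda>x. ereal (b x)) < ereal r"
  shows "eventually (\<lambda>x. b x < r) F"
proof -
  have "eventually (\<lambda>x. ereal (b x) < ereal r) F"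
    using assms Limsup_le_iff[of F "\<lambda>x. ereal (b x)" "Limsup F (\<lambda>x. ereal (b x))"] by blast
  then show ?thesis by simp
qed

lemma Limsup_le_Limsup_compose_plus:
  fixes a :: "'x \<Rightarrow> real" and b :: "'y \<Rightarrow> real"
  assumes k: "filterlim k G' G" and lim: "((\<lambda>x. a x - b (k x)) \<longlongrightarrow> c) G"
  shows "Limsup G (\<lambda>x. ereal (a x)) \<le> Limsup G' (\<lambda>y. ereal (b y)) + ereal c"
proof -
  define L where "L = Limsup G' (\<lambda>y. ereal (b y))"
  show ?thesis unfolding L_def[symmetric]
  proof (subst Limsup_le_iff, intro allI impI)
    fix Y assume Y: "Y > L + ereal c"
    show "eventually (\<lambda>x. Y > ereal (a x)) G"
    proof (cases Y)
      case (real r)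
      have "L < ereal (r - c)" using Y real by (cases L) auto
      then obtain s where s1: "L < ereal s" and s2: "s < r - c"
        using ereal_dense2 by fastforce
      have "eventually (\<lambda>x. s > b (k x)) G"
        using eventually_less_of_Limsup_less[of G' b s] s1 k unfolding L_def filterlim_iff by auto
      moreover have "eventually (\<lambda>x. a x - b (k x) < c + (r - c - s)) G"
        using order_tendstoD(2)[OF lim, of "c + (r - c - s)"] s2 by simp
      ultimately show ?thesis
        by eventually_elim (use real in simp)
    qed (use Y in simp_all)
  qed
qed

lemma Limsup_le_add:
  fixes a :: "'x \<Rightarrow> real" and b1 :: "'y \<Rightarrow> real" and b2 :: "'z \<Rightarrow> real"
  assumes k1: "filterlim k1 G1 G" and k2: "filterlim k2 G2 G"
    and le: "eventually (\<lambda>x. a x \<le> b1 (k1 x) + b2 (k2 x)) G"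
    and L1: "Limsup G1 (\<lambda>y. ereal (b1 y)) = ereal l1"
    and L2: "Limsup G2 (\<lambda>y. ereal (b2 y)) = ereal l2"
  shows "Limsup G (\<lambda>x. ereal (a x)) \<le> ereal (l1 + l2)"
proof (subst Limsup_le_iff, intro allI impI)
  fix Y assume Y: "Y > ereal (l1 + l2)"
  show "eventually (\<lambda>x. Y > ereal (a x)) G"
  proof (cases Y)
    case (real r)
    define e where "e = (r - l1 - l2) / 2"
    have e: "0 < e" using Y real e_def by simp
    have e1: "eventually (\<lambda>x. b1 (k1 x) < l1 + e) G"
      using eventually_less_of_Limsup_less[of G1 b1 "l1 + e"] L1 e k1 unfolding filterlim_iff by auto
    have e2: "eventually (\<lambda>x. b2 (k2 x) < l2 + e) G"
      using eventually_less_of_Limsup_less[of G2 b2 "l2 + e"] L2 e k2 unfolding filterlim_iff by auto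
    have sum_e: "(l1 + e) + (l2 + e) = r" using e_def by simp
    from e1 e2 le have "eventually (\<lambda>x. a x < r) G"
      by eventually_elim (use sum_e in linarith)
    then show ?thesis using real by simp
  qed (use Y in simp_all)
qed

lemma norm_diff_quot_le:
  assumes "M-lipschitz_on UNIV F" and "0 < snd y"
  shows "norm (diff_quot F d y) \<le> M * norm d"
proof -
  have "norm (F (fst y + snd y *\<^sub>R d) - F (fst y)) \<le> M * (snd y * norm d)"
    using lipschitz_on_normD[OF assms(1), of "fst y + snd y *\<^sub>R d" "fst y"] assms(2) by simp
  then show ?thesis
    using assms(2) by (simp add: diff_quot_def divide_simps mult_ac)
qed

lemma clarke_dd_lipschitz_bounds:
  assumes "M-lipschitz_on UNIV F"
  shows "clarke_dd F z d \<le> ereal (M * norm d)" "ereal (- (M * norm d)) \<le> clarke_dd F z d"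
proof -
  have bound: "eventually (\<lambda>y. \<bar>diff_quot F d y\<bar> \<le> M * norm d) (clarke_filter z)"
    using eventually_clarke_filter_pos
    by eventually_elim (use norm_diff_quot_le[OF assms] in auto)
  show "clarke_dd F z d \<le> ereal (M * norm d)"
    unfolding clarke_dd_eq_Limsup_diff_quot
    by (rule Limsup_bounded) (use bound in \<open>auto elim!: eventually_mono\<close>)
  show "ereal (- (M * norm d)) \<le> clarke_dd F z d"
    unfolding clarke_dd_eq_Limsup_diff_quot
    by (rule le_Limsup[OF clarke_filter_neq_bot]) (use bound in \<open>auto elim!: eventually_mono\<close>)
qed

definition clarke_dd_real :: "('a::real_normed_vector \<Rightarrow> real) \<Rightarrow> 'a \<Rightarrow> 'a \<Rightarrow> real" where
  "clarke_dd_real F z d = real_of_ereal (clarke_dd F z d)"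

lemma clarke_dd_eq_ereal:
  assumes "M-lipschitz_on UNIV F"
  shows "clarke_dd F z d = ereal (clarke_dd_real F z d)"
  using clarke_dd_lipschitz_bounds[OF assms, where z=z and d=d] unfolding clarke_dd_real_def
  by (cases "clarke_dd F z d") auto

lemma clarke_dd_real_le_norm:
  assumes "M-lipschitz_on UNIV F"
  shows "clarke_dd_real F z d \<le> M * norm d"
  using clarke_dd_lipschitz_bounds(1)[OF assms] clarke_dd_eq_ereal[OF assms] by (metis ereal_less_eq(3))

lemma clarke_dd_real_add_le:
  assumes lip: "M-lipschitz_on UNIV F"
  shows "clarke_dd_real F z (d1 + d2) \<le> clarke_dd_real F z d1 + clarke_dd_real F z d2"
proof -
  have shift: "filterlim (\<lambda>y. (fst y + snd y *\<^sub>R d1, snd y)) (clarke_filter z) (clarke_filter z)"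
    by (intro filterlim_Pair filterlim_snd tendsto_clarke_filter_shift)
  have "clarke_dd F z (d1 + d2) \<le> ereal (clarke_dd_real F z d1 + clarke_dd_real F z d2)"
    unfolding clarke_dd_eq_Limsup_diff_quot
  proof (rule Limsup_le_add[OF filterlim_ident shift])
    show "eventually (\<lambda>y. diff_quot F (d1 + d2) y
        \<le> diff_quot F d1 y + diff_quot F d2 (fst y + snd y *\<^sub>R d1, snd y)) (clarke_filter z)"
      using eventually_clarke_filter_pos
      by eventually_elim (simp add: diff_quot_def scaleR_right_distrib add.assoc field_simps)
  qed (use clarke_dd_eq_ereal[OF lip] clarke_dd_eq_Limsup_diff_quot in metis)+
  then show ?thesis using clarke_dd_eq_ereal[OF lip] by simp
qed

lemma clarke_dd_real_scaleR:
  assumes lip: "M-lipschitz_on UNIV F" and "0 \<le> c"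
  shows "clarke_dd_real F z (c *\<^sub>R d) = c * clarke_dd_real F z d"
proof (cases "c = 0")
  case True
  have "clarke_dd F z 0 = 0"
    unfolding clarke_dd_eq_Limsup_diff_quot diff_quot_def
    using Limsup_const[OF clarke_filter_neq_bot] by (simp add: zero_ereal_def)
  then show ?thesis using True by (simp add: clarke_dd_real_def)
next
  case False
  then have c: "0 < c" using assms(2) by simp
  have scaled: "Limsup (clarke_filter z) (\<lambda>y. ereal (c * diff_quot F d y)) = ereal c * clarke_dd F z d"
    unfolding clarke_dd_eq_Limsup_diff_quot
    using Limsup_ereal_mult_left[OF clarke_filter_neq_bot, where c=c and f="\<lambda>y. ereal (diff_quot F d y)"] c
    by simp
  have "clarke_dd F z (c *\<^sub>R d) \<le> Limsup (clarke_filter z) (\<lambda>y. ereal (c * diff_quot F d y)) + ereal 0"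
    unfolding clarke_dd_eq_Limsup_diff_quot
  proof (rule Limsup_le_Limsup_compose_plus[OF filterlim_clarke_filter_rescale[OF c]], rule tendsto_eventually)
    show "eventually (\<lambda>y. diff_quot F (c *\<^sub>R d) y - c * diff_quot F d (fst y, c * snd y) = 0) (clarke_filter z)"
      using eventually_clarke_filter_pos by eventually_elim (use c in \<open>simp add: diff_quot_def mult.commute\<close>)
  qed
  moreover have "Limsup (clarke_filter z) (\<lambda>y. ereal (c * diff_quot F d y)) \<le> clarke_dd F z (c *\<^sub>R d) + ereal 0"
    unfolding clarke_dd_eq_Limsup_diff_quot
  proof (rule Limsup_le_Limsup_compose_plus[OF filterlim_clarke_filter_rescale[OF positive_imp_inverse_positive[OF c]]],
      rule tendsto_eventually)
    show "eventually (\<lambda>y. c * diff_quot F d y - diff_quot F (c *\<^sub>R d) (fst y, inverse c * snd y) = 0) (clarke_filter z)"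
      using eventually_clarke_filter_pos by eventually_elim (use c in \<open>simp add: diff_quot_def field_simps\<close>)
  qed
  ultimately show ?thesis
    using scaled clarke_dd_eq_ereal[OF lip] by (simp add: antisym)
qed

lemma sublinear_clarke_dd_real:
  assumes "M-lipschitz_on UNIV F"
  shows "sublinear (clarke_dd_real F z)"
  using clarke_dd_real_add_le[OF assms] clarke_dd_real_scaleR[OF assms] unfolding sublinear_def by blast

lemma clarke_subdiff_eq_minorants:
  assumes "M-lipschitz_on UNIV F"
  shows "clarke_subdiff F z = {\<xi>. \<forall>d. \<xi> \<bullet> d \<le> clarke_dd_real F z d}"
  by (simp add: clarke_subdiff_def clarke_dd_eq_ereal[OF assms])

section \<open>A chain rule for Clarke directional derivatives\<close>

lemma tendsto_diff_quot_comp_plus: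
  fixes F :: "'b::real_normed_vector \<Rightarrow> real" and \<Phi> :: "'a::real_normed_vector \<Rightarrow> 'b"
  assumes lip: "M-lipschitz_on UNIV F"
    and \<Phi>: "(diff_quot \<Phi> d \<longlongrightarrow> l) (clarke_filter z)"
    and s: "(diff_quot s d \<longlongrightarrow> c) (clarke_filter z)"
  shows "((\<lambda>y. diff_quot (\<lambda>w. F (\<Phi> w) + s w) d y - diff_quot F l (\<Phi> (fst y), snd y)) \<longlongrightarrow> c)
           (clarke_filter z)"
proof -
  define err where "err y = diff_quot (\<lambda>w. F (\<Phi> w) + s w) d y - diff_quot F l (\<Phi> (fst y), snd y)
    - diff_quot s d y" for y
  have "(err \<longlongrightarrow> 0) (clarke_filter z)"
  proof (rule Lim_null_comparison)
    show "eventually (\<lambda>y. norm (err y) \<le> M * norm (diff_quot \<Phi> d y - l)) (clarke_filter z)"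
      using eventually_clarke_filter_pos
    proof eventually_elim
      case (elim y)
      obtain w t where y: "y = (w, t)" by fastforce
      have "t * err y = F (\<Phi> (w + t *\<^sub>R d)) - F (\<Phi> w + t *\<^sub>R l)"
        using elim unfolding err_def y diff_quot_def by (simp add: field_simps)
      also have "\<bar>\<dots>\<bar> \<le> M * norm (\<Phi> (w + t *\<^sub>R d) - (\<Phi> w + t *\<^sub>R l))"
        using lipschitz_on_normD[OF lip] by simp
      also have "\<Phi> (w + t *\<^sub>R d) - (\<Phi> w + t *\<^sub>R l) = t *\<^sub>R (diff_quot \<Phi> d y - l)"
        using elim unfolding y diff_quot_def by (simp add: algebra_simps)
      finally have "t * norm (err y) \<le> t * (M * norm (diff_quot \<Phi> d y - l))"
        using elim unfolding y by (simp add: abs_mult mult_ac)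
      then show ?case using elim unfolding y by simp
    qed
    show "((\<lambda>y. M * norm (diff_quot \<Phi> d y - l)) \<longlongrightarrow> 0) (clarke_filter z)"
      using tendsto_mult_right_zero[OF tendsto_norm_zero[OF LIM_zero[OF \<Phi>]]] .
  qed
  from tendsto_add[OF this s] show ?thesis by (simp add: err_def)
qed

lemma clarke_dd_comp_plus_le:
  fixes F :: "'b::real_normed_vector \<Rightarrow> real" and \<Phi> :: "'a::real_normed_vector \<Rightarrow> 'b"
  assumes "M-lipschitz_on UNIV F" and "isCont \<Phi> z"
    and "(diff_quot \<Phi> d \<longlongrightarrow> l) (clarke_filter z)" and "(diff_quot s d \<longlongrightarrow> c) (clarke_filter z)"
  shows "clarke_dd (\<lambda>w. F (\<Phi> w) + s w) z d \<le> clarke_dd F (\<Phi> z) l + ereal c"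
  unfolding clarke_dd_eq_Limsup_diff_quot
proof (rule Limsup_le_Limsup_compose_plus[where k="\<lambda>y. (\<Phi> (fst y), snd y)"])
  show "((\<lambda>y. diff_quot (\<lambda>w. F (\<Phi> w) + s w) d y - diff_quot F l (\<Phi> (fst y), snd y)) \<longlongrightarrow> c)
      (clarke_filter z)"
    by (rule tendsto_diff_quot_comp_plus[OF assms(1,3,4)])
  show "filterlim (\<lambda>y. (\<Phi> (fst y), snd y)) (clarke_filter (\<Phi> z)) (clarke_filter z)"
    by (intro filterlim_Pair filterlim_snd isCont_tendsto_compose[OF assms(2)] filterlim_fst)
qed

lemma clarke_dd_comp_plus_ge:
  fixes F :: "'b::real_normed_vector \<Rightarrow> real" and \<Phi> :: "'a::real_normed_vector \<Rightarrow> 'b"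
  assumes "M-lipschitz_on UNIV F"
    and "(diff_quot \<Phi> d \<longlongrightarrow> l) (clarke_filter z)" and "(diff_quot s d \<longlongrightarrow> c) (clarke_filter z)"
    and "clarke_regular_at F (\<Phi> z)"
  shows "clarke_dd F (\<Phi> z) l + ereal c \<le> clarke_dd (\<lambda>w. F (\<Phi> w) + s w) z d"
proof -
  have base: "filterlim (\<lambda>t. (z, t)) (clarke_filter z) (at_right 0)"
    by (intro filterlim_Pair tendsto_const filterlim_ident)
  have "((\<lambda>t. ereal (diff_quot F l (\<Phi> z, t))) \<longlongrightarrow> clarke_dd F (\<Phi> z) l) (at_right 0)"
    using assms(4) unfolding clarke_regular_at_def diff_quot_def by simp
  then have "clarke_dd F (\<Phi> z) l = Limsup (at_right 0) (\<lambda>t. ereal (diff_quot F l (\<Phi> z, t)))"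
    by (intro lim_imp_Limsup[symmetric]) (simp add: trivial_limit_at_right_real)
  also have "\<dots> \<le> clarke_dd (\<lambda>w. F (\<Phi> w) + s w) z d + ereal (- c)"
    unfolding clarke_dd_eq_Limsup_diff_quot
  proof (rule Limsup_le_Limsup_compose_plus[OF base])
    show "((\<lambda>t. diff_quot F l (\<Phi> z, t) - diff_quot (\<lambda>w. F (\<Phi> w) + s w) d (z, t)) \<longlongrightarrow> - c) (at_right 0)"
      using tendsto_minus[OF filterlim_compose[OF tendsto_diff_quot_comp_plus[OF assms(1-3)] base]]
      by simp
  qed
  finally show ?thesis
    by (cases "clarke_dd (\<lambda>w. F (\<Phi> w) + s w) z d"; cases "clarke_dd F (\<Phi> z) l") auto
qed

section \<open>Directional difference quotients of differentiable maps\<close>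

lemma has_vector_derivative_along_line:
  assumes "(f has_derivative f') (at (p + \<tau> *\<^sub>R v))"
  shows "((\<lambda>\<tau>. f (p + \<tau> *\<^sub>R v)) has_vector_derivative f' v) (at \<tau>)"
proof -
  have "((\<lambda>\<tau>. p + \<tau> *\<^sub>R v) has_derivative (\<lambda>h. h *\<^sub>R v)) (at \<tau>)"
    by (auto intro!: derivative_eq_intros)
  from has_derivative_compose[OF this assms]
  have "((\<lambda>\<tau>. f (p + \<tau> *\<^sub>R v)) has_derivative (\<lambda>h. f' (h *\<^sub>R v))) (at \<tau>)"
    by simp
  then show ?thesis
    unfolding has_vector_derivative_def
    using linear_scale[OF has_derivative_linear[OF assms]] by simp
qed

lemma tendsto_dir_quot:
  fixes f :: "'a::real_normed_vector \<Rightarrow> 'b::real_normed_vector"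
  assumes "(f has_derivative f') (at u)"
  shows "((\<lambda>s. (1 / s) *\<^sub>R (f (u + s *\<^sub>R a) - f u)) \<longlongrightarrow> f' a) (at 0)"
proof -
  have "((\<lambda>s. f (u + s *\<^sub>R a)) has_derivative (\<lambda>h. h *\<^sub>R f' a)) (at 0)"
    using has_vector_derivative_along_line[of f f' u 0 a] assms
    unfolding has_vector_derivative_def by simp
  then have "((\<lambda>s. norm (f (u + s *\<^sub>R a) - f u - s *\<^sub>R f' a) / \<bar>s\<bar>) \<longlongrightarrow> 0) (at 0)"
    unfolding has_derivative_at by simp
  then have "((\<lambda>s. (1 / s) *\<^sub>R (f (u + s *\<^sub>R a) - f u) - f' a) \<longlongrightarrow> 0) (at 0)"
  proof (rule Lim_null_comparison[rotated])
    have "norm ((1 / s) *\<^sub>R (f (u + s *\<^sub>R a) - f u) - f' a)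
        = norm (f (u + s *\<^sub>R a) - f u - s *\<^sub>R f' a) / \<bar>s\<bar>" if "s \<noteq> 0" for s
    proof -
      have "(1 / s) *\<^sub>R (f (u + s *\<^sub>R a) - f u) - f' a = (1 / s) *\<^sub>R (f (u + s *\<^sub>R a) - f u - s *\<^sub>R f' a)"
        using that by (simp add: algebra_simps)
      then show ?thesis by (simp add: divide_simps)
    qed
    then show "eventually (\<lambda>s. norm ((1 / s) *\<^sub>R (f (u + s *\<^sub>R a) - f u) - f' a)
        \<le> norm (f (u + s *\<^sub>R a) - f u - s *\<^sub>R f' a) / \<bar>s\<bar>) (at (0::real))"
      unfolding eventually_at_filter by simp
  qed
  then show ?thesis using Lim_null by blast
qed

lemma tendsto_dir_quot_real:
  fixes f :: "'a::real_normed_vector \<Rightarrow> real"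
  assumes "(f has_derivative f') (at u)"
  shows "((\<lambda>s. (f (u + s *\<^sub>R a) - f u) / s) \<longlongrightarrow> f' a) (at 0)"
  using tendsto_dir_quot[OF assms, of a] by simp

lemma norm_increment_minus_linear_le:
  fixes f :: "real \<Rightarrow> 'b::real_normed_vector"
  assumes der: "\<And>\<tau>. \<tau> \<in> closed_segment 0 t \<Longrightarrow> (f has_vector_derivative f' \<tau>) (at \<tau>)"
    and bound: "\<And>\<tau>. \<tau> \<in> closed_segment 0 t \<Longrightarrow> norm (f' \<tau> - K) \<le> B"
  shows "norm (f t - f 0 - t *\<^sub>R K) \<le> B * \<bar>t\<bar>"
proof -
  have "norm ((f t - t *\<^sub>R K) - (f 0 - 0 *\<^sub>R K)) \<le> B * norm (t - 0)"
  proof (rule differentiable_bound[where f'="\<lambda>\<tau> h. h *\<^sub>R (f' \<tau> - K)"])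
    show "((\<lambda>\<tau>. f \<tau> - \<tau> *\<^sub>R K) has_derivative (\<lambda>h. h *\<^sub>R (f' \<tau> - K))) (at \<tau> within closed_segment 0 t)"
      if "\<tau> \<in> closed_segment 0 t" for \<tau>
    proof -
      have "((\<lambda>\<tau>. f \<tau> - \<tau> *\<^sub>R K) has_derivative (\<lambda>h. h *\<^sub>R f' \<tau> - h *\<^sub>R K)) (at \<tau>)"
        using der[OF that] unfolding has_vector_derivative_def
        by (intro has_derivative_diff has_derivative_scaleR_left has_derivative_ident)
      then show ?thesis by (simp add: has_derivative_at_withinI scaleR_diff_right)
    qed
    show "onorm (\<lambda>h. h *\<^sub>R (f' \<tau> - K)) \<le> B" if "\<tau> \<in> closed_segment 0 t" for \<tau>
      using bound[OF that] onorm_scaleR_left[OF bounded_linear_ident, of "f' \<tau> - K"] by (simp add: onorm_id)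
  qed auto
  then show ?thesis by (simp add: algebra_simps)
qed

lemma norm_diff_quot_minus_le:
  fixes f :: "'a::real_normed_vector \<Rightarrow> 'b::real_normed_vector"
  assumes der: "\<And>w. (f has_derivative f' w) (at w)" and "0 < snd y"
    and bound: "\<And>\<tau>. 0 \<le> \<tau> \<Longrightarrow> \<tau> \<le> snd y \<Longrightarrow> norm (f' (fst y + \<tau> *\<^sub>R d) d - K) \<le> B"
  shows "norm (diff_quot f d y - K) \<le> B"
proof -
  obtain w t where y: "y = (w, t)" by fastforce
  have "norm (f (w + t *\<^sub>R d) - f (w + 0 *\<^sub>R d) - t *\<^sub>R K) \<le> B * \<bar>t\<bar>"
  proof (rule norm_increment_minus_linear_le)
    show "((\<lambda>\<tau>. f (w + \<tau> *\<^sub>R d)) has_vector_derivative f' (w + \<tau> *\<^sub>R d) d) (at \<tau>)" for \<tau>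
      by (rule has_vector_derivative_along_line[OF der])
    show "norm (f' (w + \<tau> *\<^sub>R d) d - K) \<le> B" if "\<tau> \<in> closed_segment 0 t" for \<tau>
      using bound that \<open>0 < snd y\<close> unfolding y by (simp add: closed_segment_eq_real_ivl)
  qed
  moreover have "diff_quot f d y - K = (1 / t) *\<^sub>R (f (w + t *\<^sub>R d) - f w - t *\<^sub>R K)"
    using \<open>0 < snd y\<close> unfolding y diff_quot_def by (simp add: algebra_simps)
  ultimately show ?thesis
    using \<open>0 < snd y\<close> unfolding y by (simp add: divide_simps mult.commute)
qed

lemma tendsto_diff_quot_of_isCont_derivative:
  fixes f :: "'a::real_normed_vector \<Rightarrow> 'b::real_normed_vector"
  assumes der: "\<And>w. (f has_derivative f' w) (at w)" and cont: "isCont (\<lambda>w. f' w d) z"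
  shows "(diff_quot f d \<longlongrightarrow> f' z d) (clarke_filter z)"
  unfolding tendsto_iff
proof (intro allI impI)
  fix \<epsilon> :: real assume "0 < \<epsilon>"
  then obtain \<delta> where "0 < \<delta>" and \<delta>: "\<And>u. dist u z < \<delta> \<Longrightarrow> norm (f' u d - f' z d) < \<epsilon> / 2"
    using cont unfolding continuous_at_eps_delta dist_norm by (metis half_gt_zero)
  define r where "r = \<delta> / (2 * (norm d + 1))"
  have "0 < r" using \<open>0 < \<delta>\<close> unfolding r_def by (simp add: add_nonneg_pos)
  have r: "r * (norm d + 1) = \<delta> / 2"
  proof -
    have "2 * norm d + 2 \<noteq> 0" using norm_ge_zero[of d] by linarith
    then show ?thesis unfolding r_def by (simp add: divide_simps)
  qed
  have "eventually (\<lambda>y. dist (fst y) z < \<delta> / 2) (clarke_filter z)"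
    using filterlim_fst[of "nhds z" "at_right (0::real)", unfolded tendsto_iff, rule_format, of "\<delta> / 2"]
      \<open>0 < \<delta>\<close> by simp
  moreover have "eventually (\<lambda>y. snd y < r) (clarke_filter z)"
    using order_tendstoD(2)[OF tendsto_clarke_filter_snd \<open>0 < r\<close>] .
  ultimately show "eventually (\<lambda>y. dist (diff_quot f d y) (f' z d) < \<epsilon>) (clarke_filter z)"
    using eventually_clarke_filter_pos
  proof eventually_elim
    case (elim y)
    have "norm (diff_quot f d y - f' z d) \<le> \<epsilon> / 2"
    proof (rule norm_diff_quot_minus_le[OF der \<open>0 < snd y\<close>])
      fix \<tau> :: real assume "0 \<le> \<tau>" "\<tau> \<le> snd y"
      then have "\<tau> * norm d \<le> r * (norm d + 1)" using elim by (intro mult_mono) auto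
      then have "norm (\<tau> *\<^sub>R d) \<le> \<delta> / 2" unfolding r using \<open>0 \<le> \<tau>\<close> by simp
      moreover have "dist (fst y + \<tau> *\<^sub>R d) z \<le> dist (fst y) z + norm (\<tau> *\<^sub>R d)"
        using norm_triangle_ineq[of "fst y - z" "\<tau> *\<^sub>R d"] by (simp add: dist_norm algebra_simps)
      ultimately have "dist (fst y + \<tau> *\<^sub>R d) z < \<delta>" using elim by simp
      then show "norm (f' (fst y + \<tau> *\<^sub>R d) d - f' z d) \<le> \<epsilon> / 2" by (intro less_imp_le \<delta>)
    qed
    then show ?case using \<open>0 < \<epsilon>\<close> by (simp add: dist_norm)
  qed
qed

lemma second_difference_le:
  fixes \<phi> :: "'a::real_normed_vector \<Rightarrow> real"
  assumes der: "\<And>w. (\<phi> has_derivative D\<phi> w) (at w)"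
    and der_b: "\<And>w. ((\<lambda>w. D\<phi> w b) has_derivative Db w) (at w)"
    and near: "\<And>\<tau> \<sigma>. \<bar>\<tau>\<bar> \<le> \<bar>t\<bar> \<Longrightarrow> \<bar>\<sigma>\<bar> \<le> \<bar>s\<bar> \<Longrightarrow> \<bar>Db (z + \<tau> *\<^sub>R b + \<sigma> *\<^sub>R a) a - C\<bar> \<le> e"
  shows "\<bar>\<phi> (z + t *\<^sub>R b + s *\<^sub>R a) - \<phi> (z + t *\<^sub>R b) - (\<phi> (z + s *\<^sub>R a) - \<phi> z) - t * (s * C)\<bar>
    \<le> e * \<bar>s\<bar> * \<bar>t\<bar>"
proof -
  have "norm ((\<phi> (z + s *\<^sub>R a + t *\<^sub>R b) - \<phi> (z + t *\<^sub>R b)) - (\<phi> (z + s *\<^sub>R a + 0 *\<^sub>R b) - \<phi> (z + 0 *\<^sub>R b))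
      - t *\<^sub>R (s * C)) \<le> e * \<bar>s\<bar> * \<bar>t\<bar>"
  proof (rule norm_increment_minus_linear_le)
    show "((\<lambda>\<tau>. \<phi> (z + s *\<^sub>R a + \<tau> *\<^sub>R b) - \<phi> (z + \<tau> *\<^sub>R b)) has_vector_derivative
        D\<phi> (z + s *\<^sub>R a + \<tau> *\<^sub>R b) b - D\<phi> (z + \<tau> *\<^sub>R b) b) (at \<tau>)" for \<tau>
      by (intro has_vector_derivative_diff has_vector_derivative_along_line der)
    show "norm (D\<phi> (z + s *\<^sub>R a + \<tau> *\<^sub>R b) b - D\<phi> (z + \<tau> *\<^sub>R b) b - s * C) \<le> e * \<bar>s\<bar>"
      if "\<tau> \<in> closed_segment 0 t" for \<tau>
    proof -
      have "\<bar>\<tau>\<bar> \<le> \<bar>t\<bar>" using that by (auto simp: closed_segment_eq_real_ivl split: if_splits)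
      have "norm (D\<phi> (z + \<tau> *\<^sub>R b + s *\<^sub>R a) b - D\<phi> (z + \<tau> *\<^sub>R b + 0 *\<^sub>R a) b - s *\<^sub>R C) \<le> e * \<bar>s\<bar>"
      proof (rule norm_increment_minus_linear_le)
        show "((\<lambda>\<sigma>. D\<phi> (z + \<tau> *\<^sub>R b + \<sigma> *\<^sub>R a) b) has_vector_derivative Db (z + \<tau> *\<^sub>R b + \<sigma> *\<^sub>R a) a)
            (at \<sigma>)" for \<sigma>
          by (rule has_vector_derivative_along_line[OF der_b])
        show "norm (Db (z + \<tau> *\<^sub>R b + \<sigma> *\<^sub>R a) a - C) \<le> e" if "\<sigma> \<in> closed_segment 0 s" for \<sigma>
          using near[OF \<open>\<bar>\<tau>\<bar> \<le> \<bar>t\<bar>\<close>] that by (auto simp: closed_segment_eq_real_ivl split: if_splits)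
      qed
      then show ?thesis by (simp add: algebra_simps)
    qed
  qed
  then show ?thesis by (simp add: algebra_simps)
qed

lemma dir_deriv_increment_le:
  fixes \<phi> :: "'a::real_normed_vector \<Rightarrow> real"
  assumes der: "\<And>w. (\<phi> has_derivative D\<phi> w) (at w)"
    and der_b: "\<And>w. ((\<lambda>w. D\<phi> w b) has_derivative Db w) (at w)"
    and "0 < r"
    and near: "\<And>\<tau> \<sigma>. \<bar>\<tau>\<bar> \<le> \<bar>t\<bar> \<Longrightarrow> \<bar>\<sigma>\<bar> \<le> r \<Longrightarrow> \<bar>Db (z + \<tau> *\<^sub>R b + \<sigma> *\<^sub>R a) a - C\<bar> \<le> e"
  shows "\<bar>D\<phi> (z + t *\<^sub>R b) a - D\<phi> z a - t * C\<bar> \<le> e * \<bar>t\<bar>"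
proof -
  define \<Delta> where "\<Delta> s = \<phi> (z + t *\<^sub>R b + s *\<^sub>R a) - \<phi> (z + t *\<^sub>R b) - (\<phi> (z + s *\<^sub>R a) - \<phi> z)" for s
  have "((\<lambda>s. \<Delta> s / s) \<longlongrightarrow> D\<phi> (z + t *\<^sub>R b) a - D\<phi> z a) (at 0)"
    using tendsto_diff[OF tendsto_dir_quot_real[OF der] tendsto_dir_quot_real[OF der]]
    unfolding \<Delta>_def by (simp add: diff_divide_distrib)
  then show ?thesis
  proof (rule tendsto_upperbound[OF tendsto_rabs[OF tendsto_diff[OF _ tendsto_const]]])
    show "eventually (\<lambda>s. \<bar>\<Delta> s / s - t * C\<bar> \<le> e * \<bar>t\<bar>) (at 0)"
      unfolding eventually_at
    proof (intro exI[of _ r] conjI ballI impI allI)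
      fix s :: real assume "s \<noteq> 0 \<and> dist s 0 < r"
      then have "s \<noteq> 0" "\<bar>s\<bar> \<le> r" by auto
      have "\<bar>\<Delta> s / s - t * C\<bar> = \<bar>\<Delta> s - t * (s * C)\<bar> / \<bar>s\<bar>"
        using \<open>s \<noteq> 0\<close> by (simp add: field_simps flip: abs_divide)
      also have "\<dots> \<le> e * \<bar>t\<bar>"
        using second_difference_le[OF der der_b, of t s z a C e] near \<open>\<bar>s\<bar> \<le> r\<close> \<open>s \<noteq> 0\<close>
        unfolding \<Delta>_def by (simp add: divide_simps mult_ac)
      finally show "\<bar>\<Delta> s / s - t * C\<bar> \<le> e * \<bar>t\<bar>" .
    qed (rule \<open>0 < r\<close>)
  qed simp
qed

lemma schwarz_dir_quot:
  fixes \<phi> :: "'a::real_normed_vector \<Rightarrow> real"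
  assumes der: "\<And>w. (\<phi> has_derivative D\<phi> w) (at w)"
    and der_b: "\<And>w. ((\<lambda>w. D\<phi> w b) has_derivative Db w) (at w)"
    and cont: "isCont (\<lambda>w. Db w a) z"
  shows "((\<lambda>t. (D\<phi> (z + t *\<^sub>R b) a - D\<phi> z a) / t) \<longlongrightarrow> Db z a) (at 0)"
  unfolding LIM_eq
proof (intro allI impI)
  fix \<epsilon> :: real assume "0 < \<epsilon>"
  then obtain \<delta> where "0 < \<delta>" and \<delta>: "\<And>u. dist u z < \<delta> \<Longrightarrow> \<bar>Db u a - Db z a\<bar> \<le> \<epsilon> / 2"
    using cont unfolding continuous_at_eps_delta dist_real_def by (meson half_gt_zero less_imp_le)
  define r where "r = \<delta> / (norm a + norm b + 1)"
  have "0 < r" using \<open>0 < \<delta>\<close> unfolding r_def by (simp add: add_nonneg_pos)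
  have near: "\<bar>Db (z + \<tau> *\<^sub>R b + \<sigma> *\<^sub>R a) a - Db z a\<bar> \<le> \<epsilon> / 2" if "\<bar>\<tau>\<bar> \<le> r" "\<bar>\<sigma>\<bar> \<le> r" for \<tau> \<sigma>
  proof (rule \<delta>)
    have "dist (z + \<tau> *\<^sub>R b + \<sigma> *\<^sub>R a) z \<le> \<bar>\<tau>\<bar> * norm b + \<bar>\<sigma>\<bar> * norm a"
      using norm_triangle_ineq[of "\<tau> *\<^sub>R b" "\<sigma> *\<^sub>R a"] by (simp add: dist_norm)
    also have "\<dots> \<le> r * norm b + r * norm a"
      using that by (intro add_mono mult_right_mono) auto
    also have "\<dots> = \<delta> * ((norm a + norm b) / (norm a + norm b + 1))"
      unfolding r_def by (simp add: algebra_simps add_divide_distrib)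
    also have "\<dots> < \<delta>"
      using \<open>0 < \<delta>\<close> by (simp add: add_nonneg_pos divide_less_eq)
    finally show "dist (z + \<tau> *\<^sub>R b + \<sigma> *\<^sub>R a) z < \<delta>" .
  qed
  show "\<exists>r>0. \<forall>t. t \<noteq> 0 \<and> norm (t - 0) < r \<longrightarrow> norm ((D\<phi> (z + t *\<^sub>R b) a - D\<phi> z a) / t - Db z a) < \<epsilon>"
  proof (intro exI[of _ r] conjI allI impI)
    fix t :: real assume t: "t \<noteq> 0 \<and> norm (t - 0) < r"
    have "\<bar>D\<phi> (z + t *\<^sub>R b) a - D\<phi> z a - t * Db z a\<bar> \<le> \<epsilon> / 2 * \<bar>t\<bar>"
      using t by (intro dir_deriv_increment_le[OF der der_b \<open>0 < r\<close>] near) auto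
    moreover have "(D\<phi> (z + t *\<^sub>R b) a - D\<phi> z a) / t - Db z a = (D\<phi> (z + t *\<^sub>R b) a - D\<phi> z a - t * Db z a) / t"
      using t by (simp add: field_simps)
    ultimately have "norm ((D\<phi> (z + t *\<^sub>R b) a - D\<phi> z a) / t - Db z a) \<le> \<epsilon> / 2"
      using t by (simp add: abs_divide divide_simps mult.commute)
    then show "norm ((D\<phi> (z + t *\<^sub>R b) a - D\<phi> z a) / t - Db z a) < \<epsilon>" using \<open>0 < \<epsilon>\<close> by simp
  qed (rule \<open>0 < r\<close>)
qed

lemma tendsto_matrix_vector_mult:
  fixes A :: "'x \<Rightarrow> real^'n^'m"
  assumes "(A \<longlongrightarrow> A0) F" and "(v \<longlongrightarrow> v0) F"
  shows "((\<lambda>t. A t *v v t) \<longlongrightarrow> A0 *v v0) F"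
  unfolding matrix_vector_mult_def by (intro tendsto_intros assms)

lemma tendsto_vector_matrix_mult:
  fixes A :: "'x \<Rightarrow> real^'n^'m"
  assumes "(A \<longlongrightarrow> A0) F" and "(v \<longlongrightarrow> v0) F"
  shows "((\<lambda>t. v t v* A t) \<longlongrightarrow> v0 v* A0) F"
  unfolding vector_matrix_mult_def by (intro tendsto_intros assms)

lemma matrix_vector_mult_axis_nth: "(A *v axis k 1) $ i = A $ i $ k"
  by (simp add: matrix_vector_mult_def axis_def if_distrib cong: if_cong)

lemma uminus_matrix_vector_mult: "(- A) *v (x::real^'n) = - (A *v x)"
  by (simp add: matrix_vector_mult_def vec_eq_iff sum_negf)

lemma has_derivative_vec_nthI:
  fixes f :: "'a::real_normed_vector \<Rightarrow> real^'m"
  assumes "\<And>j. ((\<lambda>w. f w $ j) has_derivative (\<lambda>e. f' e $ j)) (at u)"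
  shows "(f has_derivative f') (at u)"
proof -
  have "(f has_derivative f') (at u within UNIV)"
  proof (rule has_derivative_componentwise_within[THEN iffD2], rule ballI)
    fix i :: "real^'m" assume "i \<in> Basis"
    then obtain j where i: "i = axis j 1" using axis_inverse by blast
    have "(\<lambda>x. f x \<bullet> i) = (\<lambda>w. f w $ j)" "(\<lambda>x. f' x \<bullet> i) = (\<lambda>e. f' e $ j)"
      unfolding i by (simp_all add: inner_axis)
    then show "((\<lambda>x. f x \<bullet> i) has_derivative (\<lambda>x. f' x \<bullet> i)) (at u within UNIV)"
      using assms[of j] by simp
  qed
  then show ?thesis .
qed

lemma linear_pair_split:
  assumes "linear L"
  shows "L e = L (fst e, 0) + L (0, snd e)"
  using linear_add[OF assms, of "(fst e, 0)" "(0, snd e)"] by simp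

lemma linear_fst_axis_expansion:
  fixes L :: "(real^'n) \<times> 'b::real_vector \<Rightarrow> 'v::real_vector"
  assumes "linear L"
  shows "L (u, 0) = (\<Sum>k\<in>UNIV. u $ k *\<^sub>R L (axis k 1, 0))"
proof -
  have lin: "linear (\<lambda>v. L (v, 0))"
    using linear_add[OF assms, of "(_, 0)" "(_, 0)"] linear_scale[OF assms, of _ "(_, 0)"]
    by (intro linearI) simp_all
  then have "L ((\<Sum>k\<in>UNIV. u $ k *\<^sub>R axis k 1), 0) = (\<Sum>k\<in>UNIV. u $ k *\<^sub>R L (axis k 1, 0))"
    by (simp only: linear_sum[OF lin] linear_scale[OF lin])
  then show ?thesis using basis_expansion[of u] by (simp add: scalar_mult_eq_scaleR)
qed

lemma linear_snd_axis_expansion: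
  fixes L :: "'a::real_vector \<times> (real^'p) \<Rightarrow> 'v::real_vector"
  assumes "linear L"
  shows "L (0, v) = (\<Sum>k\<in>UNIV. v $ k *\<^sub>R L (0, axis k 1))"
proof -
  have lin: "linear (\<lambda>v. L (0, v))"
    using linear_add[OF assms, of "(0, _)" "(0, _)"] linear_scale[OF assms, of _ "(0, _)"]
    by (intro linearI) simp_all
  then have "L (0, (\<Sum>k\<in>UNIV. v $ k *\<^sub>R axis k 1)) = (\<Sum>k\<in>UNIV. v $ k *\<^sub>R L (0, axis k 1))"
    by (simp only: linear_sum[OF lin] linear_scale[OF lin])
  then show ?thesis using basis_expansion[of v] by (simp add: scalar_mult_eq_scaleR)
qed

section \<open>The lower-level function and the map \<open>A\<close>\<close>

locale lower_level =
  fixes g :: "(real^'n) \<times> (real^'p) \<Rightarrow> real" and \<mu> :: real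
    and D :: "(real^'n) \<times> (real^'p) \<Rightarrow> ((real^'n) \<times> (real^'p)) \<Rightarrow>\<^sub>L (real^'p^'p)"
  assumes mu_pos: "0 < \<mu>"
    and g_differentiable: "\<And>z. g differentiable (at z)"
    and grad_y_differentiable: "\<And>z. grad_y g differentiable (at z)"
    and hess_yy_pd: "\<And>z v. \<mu> * (norm v)\<^sup>2 \<le> v \<bullet> (hess_yy g z *v v)"
    and hess_xy_cont: "continuous_on UNIV (hess_xy g)"
    and hess_yy_deriv: "\<And>z. (hess_yy g has_derivative blinfun_apply (D z)) (at z)"
    and hess_yy_deriv_cont: "continuous_on UNIV D"
begin

abbreviation "G \<equiv> grad_y g"
abbreviation "H \<equiv> hess_yy g"
abbreviation "X \<equiv> hess_xy g"
abbreviation "Hi w \<equiv> matrix_inv (hess_yy g w)"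

definition grad_y_nth_deriv :: "(real^'n) \<times> (real^'p) \<Rightarrow> 'p \<Rightarrow> (real^'n) \<times> (real^'p) \<Rightarrow> real" where
  "grad_y_nth_deriv w j = frechet_derivative (\<lambda>w. G w $ j) (at w)"

lemma has_derivative_grad_y_nth: "((\<lambda>w. G w $ j) has_derivative grad_y_nth_deriv w j) (at w)"
proof -
  obtain G' where "(G has_derivative G') (at w)"
    using grad_y_differentiable unfolding differentiable_def by blast
  then have "(\<lambda>w. G w $ j) differentiable (at w)"
    unfolding differentiable_def by (blast intro: bounded_linear.has_derivative[OF bounded_linear_vec_nth])
  then show ?thesis unfolding grad_y_nth_deriv_def by (rule frechet_derivative_works[THEN iffD1])
qed

lemma grad_y_nth_deriv_axis:
  "grad_y_nth_deriv w j (0, axis i 1) = H w $ i $ j"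
  "grad_y_nth_deriv w j (axis k 1, 0) = X w $ k $ j"
  by (simp_all add: grad_y_nth_deriv_def hess_yy_def hess_xy_def)

lemma grad_y_nth_deriv_snd: "grad_y_nth_deriv w i (0, v) = (\<Sum>j\<in>UNIV. v $ j * H w $ j $ i)"
  using linear_snd_axis_expansion[OF has_derivative_linear[OF has_derivative_grad_y_nth], where v=v]
  by (simp add: grad_y_nth_deriv_axis)

definition grad_y_deriv :: "(real^'n) \<times> (real^'p) \<Rightarrow> (real^'n) \<times> (real^'p) \<Rightarrow> real^'p" where
  "grad_y_deriv w e = fst e v* X w + snd e v* H w"

lemma has_derivative_grad_y: "(G has_derivative grad_y_deriv w) (at w)"
proof (rule has_derivative_vec_nthI)
  fix j
  have lin: "linear (grad_y_nth_deriv w j)"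
    using has_derivative_linear[OF has_derivative_grad_y_nth] .
  have "(\<lambda>e. grad_y_deriv w e $ j) = grad_y_nth_deriv w j"
  proof
    fix e
    show "grad_y_deriv w e $ j = grad_y_nth_deriv w j e"
      using linear_pair_split[OF lin, of e] linear_fst_axis_expansion[OF lin, of "fst e"]
        linear_snd_axis_expansion[OF lin, of "snd e"]
      by (simp add: grad_y_nth_deriv_axis grad_y_deriv_def vector_matrix_mult_def)
  qed
  then show "((\<lambda>w. G w $ j) has_derivative (\<lambda>e. grad_y_deriv w e $ j)) (at w)"
    using has_derivative_grad_y_nth by simp
qed

lemma isCont_grad_y: "isCont G z"
  using has_derivative_continuous[OF has_derivative_grad_y] .

lemma isCont_hess_yy: "isCont H z"
  using has_derivative_continuous[OF hess_yy_deriv] .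

lemma isCont_hess_xy: "isCont X z"
  using hess_xy_cont continuous_on_eq_continuous_at[OF open_UNIV] by blast

lemma isCont_hess_yy_deriv_apply: "isCont (\<lambda>w. blinfun_apply (D w) e) z"
proof -
  have "isCont D z"
    using hess_yy_deriv_cont continuous_on_eq_continuous_at[OF open_UNIV] by blast
  then show ?thesis unfolding isCont_def by (rule blinfun.tendsto[OF _ tendsto_const])
qed

lemma has_derivative_hess_yy_nth:
  "((\<lambda>w. H w $ i $ j) has_derivative (\<lambda>e. D w e $ i $ j)) (at w)"
  using bounded_linear.has_derivative[OF bounded_linear_vec_nth
      bounded_linear.has_derivative[OF bounded_linear_vec_nth hess_yy_deriv]] .

lemma hess_yy_sym: "H w $ i $ j = H w $ j $ i"
proof -
  have "((\<lambda>t. (G (w + t *\<^sub>R (0, axis j 1)) $ i - G w $ i) / t) \<longlongrightarrow> H w $ i $ j) (at 0)"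
  proof -
    have "((\<lambda>t. (frechet_derivative g (at (w + t *\<^sub>R (0, axis j 1))) (0, axis i 1)
        - frechet_derivative g (at w) (0, axis i 1)) / t) \<longlongrightarrow> grad_y_nth_deriv w j (0, axis i 1)) (at 0)"
    proof (rule schwarz_dir_quot)
      show "(g has_derivative frechet_derivative g (at u)) (at u)" for u
        using g_differentiable frechet_derivative_works by blast
      show "((\<lambda>u. frechet_derivative g (at u) (0, axis j 1)) has_derivative grad_y_nth_deriv u j) (at u)" for u
        using has_derivative_grad_y_nth by (simp add: grad_y_def)
      show "isCont (\<lambda>u. grad_y_nth_deriv u j (0, axis i 1)) w"
        using isCont_hess_yy by (simp add: grad_y_nth_deriv_axis)
    qed
    then show ?thesis by (simp add: grad_y_def grad_y_nth_deriv_axis)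
  qed
  moreover have "((\<lambda>t. (G (w + t *\<^sub>R (0, axis j 1)) $ i - G w $ i) / t) \<longlongrightarrow> H w $ j $ i) (at 0)"
    using tendsto_dir_quot_real[OF has_derivative_grad_y_nth[of i w], of "(0, axis j 1)"]
    by (simp add: grad_y_nth_deriv_axis)
  ultimately show ?thesis using tendsto_unique[OF at_neq_bot] by blast
qed

lemma hess_yy_transpose: "transpose (H w) = H w"
  by (simp add: transpose_def vec_eq_iff hess_yy_sym)

lemma hess_yy_invertible: "invertible (H w)"
proof -
  have "inj ((*v) (H w))"
  proof (rule injI)
    fix a b assume "H w *v a = H w *v b"
    then have "H w *v (a - b) = 0" by (simp add: matrix_vector_mult_diff_distrib)
    then have "\<mu> * (norm (a - b))\<^sup>2 \<le> 0" using hess_yy_pd by (metis inner_zero_right)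
    then show "a = b" using mu_pos by (simp add: mult_le_0_iff)
  qed
  then show ?thesis using matrix_left_invertible_injective invertible_left_inverse by blast
qed

lemma hess_yy_inv: "H w ** Hi w = mat 1" "Hi w ** H w = mat 1"
proof -
  have "\<exists>A'. H w ** A' = mat 1 \<and> A' ** H w = mat 1"
    using hess_yy_invertible unfolding invertible_def .
  then show "H w ** Hi w = mat 1" "Hi w ** H w = mat 1"
    unfolding matrix_inv_def by (metis (mono_tags, lifting) someI_ex)+
qed

lemma hess_yy_inv_cancel [simp]: "H w *v (Hi w *v v) = v" "Hi w *v (H w *v v) = v"
  by (simp_all add: matrix_vector_mul_assoc hess_yy_inv)

lemma hess_yy_inv_transpose: "transpose (Hi w) = Hi w"
proof -
  have "transpose (Hi w) ** H w = mat 1"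
    using matrix_transpose_mul[of "H w" "Hi w"] by (simp add: hess_yy_inv hess_yy_transpose)
  then have "transpose (Hi w) = transpose (Hi w) ** (H w ** Hi w)" by (simp add: hess_yy_inv)
  also have "\<dots> = Hi w" using \<open>transpose (Hi w) ** H w = mat 1\<close> by (simp add: matrix_mul_assoc)
  finally show ?thesis .
qed

lemma norm_hess_yy_inv_le: "norm (Hi w *v v) \<le> norm v / \<mu>"
proof -
  define u where "u = Hi w *v v"
  have "\<mu> * (norm u)\<^sup>2 \<le> u \<bullet> v"
    using hess_yy_pd[where z=w and v=u] unfolding u_def by simp
  also have "\<dots> \<le> norm u * norm v" by (rule norm_cauchy_schwarz)
  finally have "(\<mu> * norm u) * norm u \<le> norm v * norm u" by (simp add: power2_eq_square mult_ac)
  then have "\<mu> * norm u \<le> norm v"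
    by (cases "norm u = 0") (auto simp: mult_le_cancel_right)
  then show ?thesis unfolding u_def using mu_pos by (simp add: field_simps)
qed

lemma isCont_hess_yy_inv: "isCont Hi z"
  unfolding isCont_def
proof (rule vec_tendstoI, rule vec_tendstoI)
  fix i k
  define u where "u = Hi z *v axis k 1"
  have "((\<lambda>w. Hi w $ i $ k - Hi z $ i $ k) \<longlongrightarrow> 0) (at z)"
  proof (rule Lim_null_comparison)
    show "eventually (\<lambda>w. norm (Hi w $ i $ k - Hi z $ i $ k) \<le> norm ((H z - H w) *v u) / \<mu>) (at z)"
    proof (rule always_eventually, rule allI)
      fix w
      have "Hi w $ i $ k - Hi z $ i $ k = (Hi w *v ((H z - H w) *v u)) $ i"
        by (simp add: u_def matrix_vector_mult_diff_rdistrib matrix_vector_mult_diff_distrib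
            matrix_vector_mult_axis_nth)
      then have "norm (Hi w $ i $ k - Hi z $ i $ k) \<le> norm (Hi w *v ((H z - H w) *v u))"
        using component_le_norm_cart by simp
      also have "\<dots> \<le> norm ((H z - H w) *v u) / \<mu>" by (rule norm_hess_yy_inv_le)
      finally show "norm (Hi w $ i $ k - Hi z $ i $ k) \<le> norm ((H z - H w) *v u) / \<mu>" .
    qed
    have "((\<lambda>w. (H z - H w) *v u) \<longlongrightarrow> (H z - H z) *v u) (at z)"
      by (intro tendsto_matrix_vector_mult tendsto_intros isCont_hess_yy[unfolded isCont_def])
    then show "((\<lambda>w. norm ((H z - H w) *v u) / \<mu>) \<longlongrightarrow> 0) (at z)"
      using tendsto_divide_zero tendsto_norm by fastforce
  qed
  then show "((\<lambda>w. Hi w $ i $ k) \<longlongrightarrow> Hi z $ i $ k) (at z)" using Lim_null by blast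
qed

lemma hess_yy_deriv_sym: "D w e $ i $ j = D w e $ j $ i"
proof -
  have "((\<lambda>s. (H (w + s *\<^sub>R e) $ i $ j - H w $ i $ j) / s) \<longlongrightarrow> D w e $ i $ j) (at 0)"
    by (rule tendsto_dir_quot_real[OF has_derivative_hess_yy_nth])
  moreover have "((\<lambda>s. (H (w + s *\<^sub>R e) $ i $ j - H w $ i $ j) / s) \<longlongrightarrow> D w e $ j $ i) (at 0)"
    using tendsto_dir_quot_real[OF has_derivative_hess_yy_nth[of j i w], of e] by (simp add: hess_yy_sym[of _ j i])
  ultimately show ?thesis using tendsto_unique[OF at_neq_bot] by blast
qed

lemma hess_yy_deriv_swap: "D z (0, axis l 1) $ j $ i = D z (0, axis j 1) $ l $ i"
proof -
  have "((\<lambda>t. (grad_y_nth_deriv (z + t *\<^sub>R (0, axis j 1)) i (0, axis l 1) - grad_y_nth_deriv z i (0, axis l 1)) / t)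
      \<longlongrightarrow> D z (0, axis l 1) $ j $ i) (at 0)"
  proof (rule schwarz_dir_quot[where \<phi>="\<lambda>w. G w $ i" and Db="\<lambda>w e. D w e $ j $ i"])
    show "((\<lambda>w. G w $ i) has_derivative grad_y_nth_deriv u i) (at u)" for u
      by (rule has_derivative_grad_y_nth)
    show "((\<lambda>u. grad_y_nth_deriv u i (0, axis j 1)) has_derivative (\<lambda>e. D u e $ j $ i)) (at u)" for u
      unfolding grad_y_nth_deriv_axis by (rule has_derivative_hess_yy_nth)
    show "isCont (\<lambda>w. D w (0, axis l 1) $ j $ i) z"
      by (intro isCont_vec_nth isCont_hess_yy_deriv_apply)
  qed
  moreover have "((\<lambda>t. (H (z + t *\<^sub>R (0, axis j 1)) $ l $ i - H z $ l $ i) / t) \<longlongrightarrow> D z (0, axis j 1) $ l $ i) (at 0)"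
    by (rule tendsto_dir_quot_real[OF has_derivative_hess_yy_nth])
  ultimately show ?thesis
    using tendsto_unique[OF at_neq_bot] by (simp add: grad_y_nth_deriv_axis)
qed

lemma ddir_y_hess_yy: "ddir_y H z W = D z (0, W)"
  unfolding ddir_y_def
proof (rule tendsto_Lim[OF at_neq_bot])
  show "((\<lambda>t. (1 / t) *\<^sub>R (H (fst z, snd z + t *\<^sub>R W) - H z)) \<longlongrightarrow> D z (0, W)) (at 0)"
    using tendsto_dir_quot[OF hess_yy_deriv, of z "(0, W)"] by (cases z) simp
qed

lemma ddir_y_hess_xy: "ddir_y X z W = (\<chi> k i. \<Sum>j\<in>UNIV. W $ j * D z (axis k 1, 0) $ j $ i)"
  unfolding ddir_y_def
proof (rule tendsto_Lim[OF at_neq_bot], rule vec_tendstoI, rule vec_tendstoI)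
  fix k i
  have "((\<lambda>t. (grad_y_nth_deriv (z + t *\<^sub>R (0, W)) i (axis k 1, 0) - grad_y_nth_deriv z i (axis k 1, 0)) / t)
      \<longlongrightarrow> (\<Sum>j\<in>UNIV. W $ j * D z (axis k 1, 0) $ j $ i)) (at 0)"
  proof (rule schwarz_dir_quot[where \<phi>="\<lambda>w. G w $ i" and Db="\<lambda>w e. \<Sum>j\<in>UNIV. W $ j * D w e $ j $ i"])
    show "((\<lambda>w. G w $ i) has_derivative grad_y_nth_deriv u i) (at u)" for u
      by (rule has_derivative_grad_y_nth)
    show "((\<lambda>u. grad_y_nth_deriv u i (0, W)) has_derivative (\<lambda>e. \<Sum>j\<in>UNIV. W $ j * D u e $ j $ i)) (at u)" for u
      unfolding grad_y_nth_deriv_snd by (intro has_derivative_sum has_derivative_mult_right has_derivative_hess_yy_nth)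
    show "isCont (\<lambda>w. \<Sum>j\<in>UNIV. W $ j * D w (axis k 1, 0) $ j $ i) z"
      by (intro continuous_intros isCont_vec_nth isCont_hess_yy_deriv_apply)
  qed
  then show "((\<lambda>t. ((1 / t) *\<^sub>R (X (fst z, snd z + t *\<^sub>R W) - X z)) $ k $ i)
      \<longlongrightarrow> (\<chi> k i. \<Sum>j\<in>UNIV. W $ j * D z (axis k 1, 0) $ j $ i) $ k $ i) (at 0)"
    by (cases z) (simp add: grad_y_nth_deriv_axis)
qed


lemma isCont_grad_y_deriv: "isCont (\<lambda>w. grad_y_deriv w d) z"
  unfolding isCont_def grad_y_deriv_def
  by (intro tendsto_intros tendsto_vector_matrix_mult isCont_hess_xy[unfolded isCont_def]
      isCont_hess_yy[unfolded isCont_def])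

lemma tendsto_diff_quot_grad_y: "(diff_quot G d \<longlongrightarrow> grad_y_deriv z d) (clarke_filter z)"
  by (rule tendsto_diff_quot_of_isCont_derivative[OF has_derivative_grad_y isCont_grad_y_deriv])

lemma tendsto_diff_quot_hess_yy: "(diff_quot H d \<longlongrightarrow> D z d) (clarke_filter z)"
  by (rule tendsto_diff_quot_of_isCont_derivative[OF hess_yy_deriv isCont_hess_yy_deriv_apply])

lemma tendsto_diff_quot_penalty:
  "(diff_quot (\<lambda>w. \<beta> / 2 * (norm (G w))\<^sup>2) d \<longlongrightarrow> \<beta> * (G z \<bullet> grad_y_deriv z d)) (clarke_filter z)"
proof (rule tendsto_diff_quot_of_isCont_derivative[where f'="\<lambda>w e. \<beta> * (G w \<bullet> grad_y_deriv w e)"])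
  show "((\<lambda>w. \<beta> / 2 * (norm (G w))\<^sup>2) has_derivative (\<lambda>e. \<beta> * (G w \<bullet> grad_y_deriv w e))) (at w)" for w
  proof -
    have "((\<lambda>w. \<beta> / 2 * (G w \<bullet> G w)) has_derivative
        (\<lambda>e. \<beta> / 2 * (G w \<bullet> grad_y_deriv w e + grad_y_deriv w e \<bullet> G w))) (at w)"
      by (intro has_derivative_mult_right has_derivative_inner has_derivative_grad_y)
    then show ?thesis by (simp add: power2_norm_eq_inner inner_commute[of "grad_y_deriv w _"])
  qed
  show "isCont (\<lambda>w. \<beta> * (G w \<bullet> grad_y_deriv w d)) z"
    by (intro continuous_intros isCont_grad_y isCont_grad_y_deriv)
qed

definition Amap_deriv :: "(real^'n) \<times> (real^'p) \<Rightarrow> (real^'n) \<times> (real^'p) \<Rightarrow> real^'p" where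
  "Amap_deriv z d = snd d - Hi z *v grad_y_deriv z d + Hi z *v (D z d *v (Hi z *v G z))"

text \<open>The increment of the inverse Hessian is expressed through the increment of the Hessian,
  \<open>Hi w' - Hi w = - Hi w' (H w' - H w) Hi w\<close>, so that only difference quotients of
  \<open>G\<close> and \<open>H\<close> remain.\<close>
lemma diff_quot_Amap:
  fixes d :: "(real^'n) \<times> (real^'p)" and y :: "((real^'n) \<times> (real^'p)) \<times> real"
  assumes "snd y \<noteq> 0"
  defines "w \<equiv> fst y" and "w' \<equiv> fst y + snd y *\<^sub>R d"
  shows "diff_quot (Amap g) d y
    = snd d - Hi w' *v diff_quot G d y + Hi w' *v (diff_quot H d y *v (Hi w *v G w))"
proof -
  have resolvent: "Hi w' *v G w' - Hi w *v G w
      = Hi w' *v (G w' - G w) - Hi w' *v ((H w' - H w) *v (Hi w *v G w))"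
    by (simp add: matrix_vector_mult_diff_rdistrib matrix_vector_mult_diff_distrib)
  have "diff_quot (Amap g) d y
      = (1 / snd y) *\<^sub>R (snd w' - snd w) - (1 / snd y) *\<^sub>R (Hi w' *v G w' - Hi w *v G w)"
    unfolding diff_quot_def Amap_def w_def w'_def by (simp add: algebra_simps)
  also have "(1 / snd y) *\<^sub>R (snd w' - snd w) = snd d"
    using assms(1) by (simp add: w_def w'_def)
  also have "(1 / snd y) *\<^sub>R (Hi w' *v G w' - Hi w *v G w)
      = Hi w' *v diff_quot G d y - Hi w' *v (diff_quot H d y *v (Hi w *v G w))"
  proof -
    have dq: "diff_quot G d y = (1 / snd y) *\<^sub>R (G w' - G w)"
        "diff_quot H d y = (1 / snd y) *\<^sub>R (H w' - H w)"
      by (simp_all add: diff_quot_def w_def w'_def)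
    have "(1 / snd y) *\<^sub>R (Hi w' *v G w' - Hi w *v G w) = (1 / snd y) *\<^sub>R (Hi w' *v (G w' - G w))
        - (1 / snd y) *\<^sub>R (Hi w' *v ((H w' - H w) *v (Hi w *v G w)))"
      by (simp only: resolvent scaleR_diff_right)
    also have "\<dots> = Hi w' *v diff_quot G d y - Hi w' *v (diff_quot H d y *v (Hi w *v G w))"
      by (simp only: dq scaleR_matrix_vector_assoc[symmetric] matrix_vector_mult_scaleR)
    finally show ?thesis .
  qed
  finally show ?thesis by (simp add: algebra_simps)
qed

lemma tendsto_diff_quot_Amap: "(diff_quot (Amap g) d \<longlongrightarrow> Amap_deriv z d) (clarke_filter z)"
proof -
  have Hi_shift: "((\<lambda>y. Hi (fst y + snd y *\<^sub>R d)) \<longlongrightarrow> Hi z) (clarke_filter z)"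
    by (rule isCont_tendsto_compose[OF isCont_hess_yy_inv tendsto_clarke_filter_shift])
  have Hi_fst: "((\<lambda>y. Hi (fst y)) \<longlongrightarrow> Hi z) (clarke_filter z)"
    by (rule isCont_tendsto_compose[OF isCont_hess_yy_inv filterlim_fst])
  have G_fst: "((\<lambda>y. G (fst y)) \<longlongrightarrow> G z) (clarke_filter z)"
    by (rule isCont_tendsto_compose[OF isCont_grad_y filterlim_fst])
  have "((\<lambda>y. snd d - Hi (fst y + snd y *\<^sub>R d) *v diff_quot G d y
      + Hi (fst y + snd y *\<^sub>R d) *v (diff_quot H d y *v (Hi (fst y) *v G (fst y))))
      \<longlongrightarrow> Amap_deriv z d) (clarke_filter z)"
    unfolding Amap_deriv_def
    by (intro tendsto_intros tendsto_matrix_vector_mult Hi_shift Hi_fst G_fst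
        tendsto_diff_quot_grad_y tendsto_diff_quot_hess_yy)
  then show ?thesis
    by (rule Lim_transform_eventually)
      (use eventually_clarke_filter_pos[of z] in \<open>eventually_elim, simp add: diff_quot_Amap\<close>)
qed

lemma tendsto_diff_quot_Amap_graph:
  "(diff_quot (\<lambda>w. (fst w, Amap g w)) d \<longlongrightarrow> (fst d, Amap_deriv z d)) (clarke_filter z)"
proof -
  have "((\<lambda>y. (fst d, diff_quot (Amap g) d y)) \<longlongrightarrow> (fst d, Amap_deriv z d)) (clarke_filter z)"
    by (intro tendsto_Pair tendsto_const tendsto_diff_quot_Amap)
  then show ?thesis
    by (rule Lim_transform_eventually)
      (use eventually_clarke_filter_pos[of z] in \<open>eventually_elim, simp add: diff_quot_def\<close>)
qed

lemma isCont_Amap_graph: "isCont (\<lambda>w. (fst w, Amap g w)) z"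
  unfolding isCont_def Amap_def
  by (intro tendsto_intros tendsto_matrix_vector_mult isCont_hess_yy_inv[unfolded isCont_def]
      isCont_grad_y[unfolded isCont_def])

lemma hfun_eq: "hfun f g \<beta> = (\<lambda>w. f (fst w, Amap g w) + \<beta> / 2 * (norm (G w))\<^sup>2)"
  by (simp add: hfun_def fun_eq_iff)

lemma clarke_dd_hfun_le:
  assumes "M-lipschitz_on UNIV f"
  shows "clarke_dd (hfun f g \<beta>) z d
    \<le> clarke_dd f (fst z, Amap g z) (fst d, Amap_deriv z d) + ereal (\<beta> * (G z \<bullet> grad_y_deriv z d))"
  unfolding hfun_eq
  by (rule clarke_dd_comp_plus_le[OF assms isCont_Amap_graph tendsto_diff_quot_Amap_graph
        tendsto_diff_quot_penalty])

lemma clarke_dd_hfun_ge: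
  assumes "M-lipschitz_on UNIV f" and "clarke_regular_at f (fst z, Amap g z)"
  shows "clarke_dd f (fst z, Amap g z) (fst d, Amap_deriv z d) + ereal (\<beta> * (G z \<bullet> grad_y_deriv z d))
    \<le> clarke_dd (hfun f g \<beta>) z d"
  unfolding hfun_eq
  by (rule clarke_dd_comp_plus_ge[OF assms(1) tendsto_diff_quot_Amap_graph tendsto_diff_quot_penalty])
    (use assms(2) in simp)


lemma hess_yy_deriv_expansion:
  "D z (d1, 0) $ i $ j = (\<Sum>k\<in>UNIV. d1 $ k * D z (axis k 1, 0) $ i $ j)"
  "D z (0, d2) $ i $ j = (\<Sum>k\<in>UNIV. d2 $ k * D z (0, axis k 1) $ i $ j)"
proof -
  have lin: "linear (blinfun_apply (D z))"
    by (rule bounded_linear.linear[OF blinfun.bounded_linear_right])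
  show "D z (d1, 0) $ i $ j = (\<Sum>k\<in>UNIV. d1 $ k * D z (axis k 1, 0) $ i $ j)"
    using linear_fst_axis_expansion[OF lin, of d1] by (simp add: sum_component)
  show "D z (0, d2) $ i $ j = (\<Sum>k\<in>UNIV. d2 $ k * D z (0, axis k 1) $ i $ j)"
    using linear_snd_axis_expansion[OF lin, of d2] by (simp add: sum_component)
qed

lemma inner_hess_yy_deriv_fst: "u \<bullet> (D z (d1, 0) *v W) = (ddir_y X z W *v u) \<bullet> d1"
proof -
  define T where "T k = D z (axis k 1, 0)" for k
  have ddir: "ddir_y X z W $ k $ i = (\<Sum>j\<in>UNIV. W $ j * T k $ i $ j)" for k i
    unfolding ddir_y_hess_xy T_def vec_lambda_beta
    by (rule sum.cong[OF refl]) (simp only: hess_yy_deriv_sym[of z "(axis k 1, 0)" i])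
  have ent: "D z (d1, 0) $ i $ j = (\<Sum>k\<in>UNIV. d1 $ k * T k $ i $ j)" for i j
    unfolding T_def by (rule hess_yy_deriv_expansion(1))
  define F where "F i j k = u $ i * W $ j * d1 $ k * T k $ i $ j" for i j k
  have lhs: "u \<bullet> (D z (d1, 0) *v W) = (\<Sum>i\<in>UNIV. \<Sum>j\<in>UNIV. \<Sum>k\<in>UNIV. F i j k)"
    unfolding inner_vec_def inner_real_def matrix_vector_mult_def F_def vec_lambda_beta ent
    by (simp add: sum_distrib_left sum_distrib_right mult_ac)
  have "(ddir_y X z W *v u) \<bullet> d1 = (\<Sum>k\<in>UNIV. \<Sum>i\<in>UNIV. \<Sum>j\<in>UNIV. F i j k)"
    unfolding inner_vec_def inner_real_def matrix_vector_mult_def F_def vec_lambda_beta ddir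
    by (simp add: sum_distrib_left sum_distrib_right mult_ac)
  also have "\<dots> = (\<Sum>i\<in>UNIV. \<Sum>k\<in>UNIV. \<Sum>j\<in>UNIV. F i j k)"
    by (rule sum.swap)
  also have "\<dots> = (\<Sum>i\<in>UNIV. \<Sum>j\<in>UNIV. \<Sum>k\<in>UNIV. F i j k)"
    by (rule sum.cong[OF refl], rule sum.swap)
  finally show ?thesis using lhs by simp
qed

lemma inner_hess_yy_deriv_snd: "u \<bullet> (D z (0, d2) *v W) = (ddir_y H z W *v u) \<bullet> d2"
proof -
  define T where "T k = D z (0, axis k 1)" for k
  have swap: "T j $ l $ i = T l $ i $ j" for i j l
    unfolding T_def using hess_yy_deriv_swap[of z j l i] hess_yy_deriv_sym[of z "(0, axis l 1)" j i]
    by linarith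
  have ddir: "ddir_y H z W $ l $ i = (\<Sum>j\<in>UNIV. W $ j * T l $ i $ j)" for l i
    unfolding ddir_y_hess_yy hess_yy_deriv_expansion(2) T_def[symmetric]
    by (rule sum.cong[OF refl], subst swap, rule refl)
  have ent: "D z (0, d2) $ i $ j = (\<Sum>l\<in>UNIV. d2 $ l * T l $ i $ j)" for i j
    unfolding T_def by (rule hess_yy_deriv_expansion(2))
  define F where "F i j l = u $ i * W $ j * d2 $ l * T l $ i $ j" for i j l
  have lhs: "u \<bullet> (D z (0, d2) *v W) = (\<Sum>i\<in>UNIV. \<Sum>j\<in>UNIV. \<Sum>l\<in>UNIV. F i j l)"
    unfolding inner_vec_def inner_real_def matrix_vector_mult_def F_def vec_lambda_beta ent
    by (simp add: sum_distrib_left sum_distrib_right mult_ac)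
  have "(ddir_y H z W *v u) \<bullet> d2 = (\<Sum>l\<in>UNIV. \<Sum>i\<in>UNIV. \<Sum>j\<in>UNIV. F i j l)"
    unfolding inner_vec_def inner_real_def matrix_vector_mult_def F_def vec_lambda_beta ddir
    by (simp add: sum_distrib_left sum_distrib_right mult_ac)
  also have "\<dots> = (\<Sum>i\<in>UNIV. \<Sum>l\<in>UNIV. \<Sum>j\<in>UNIV. F i j l)"
    by (rule sum.swap)
  also have "\<dots> = (\<Sum>i\<in>UNIV. \<Sum>j\<in>UNIV. \<Sum>l\<in>UNIV. F i j l)"
    by (rule sum.cong[OF refl], rule sum.swap)
  finally show ?thesis using lhs by simp
qed

definition Amap_jac_T :: "(real^'n) \<times> (real^'p) \<Rightarrow> (real^'n) \<times> (real^'p) \<Rightarrow> (real^'n) \<times> (real^'p)" where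
  "Amap_jac_T z \<xi> = (fst \<xi> + JAx g z *v snd \<xi>, JAy g z *v snd \<xi>)"

definition penalty_grad :: "real \<Rightarrow> (real^'n) \<times> (real^'p) \<Rightarrow> (real^'n) \<times> (real^'p)" where
  "penalty_grad \<beta> z = (\<beta> *\<^sub>R (X z *v G z), \<beta> *\<^sub>R (H z *v G z))"

lemma linear_Amap_jac_T: "linear (Amap_jac_T z)"
  unfolding Amap_jac_T_def
  by (rule linearI) (simp_all add: matrix_vector_right_distrib matrix_vector_mult_scaleR algebra_simps)

lemma penalty_grad_inner: "penalty_grad \<beta> z \<bullet> d = \<beta> * (G z \<bullet> grad_y_deriv z d)"
proof -
  have "G z \<bullet> (fst d v* X z) = (X z *v G z) \<bullet> fst d" "G z \<bullet> (snd d v* H z) = (H z *v G z) \<bullet> snd d"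
    using dot_lmul_matrix[of "fst d" "X z" "G z"] dot_lmul_matrix[of "snd d" "H z" "G z"]
    by (simp_all add: inner_commute)
  then show ?thesis
    unfolding penalty_grad_def grad_y_deriv_def by (simp add: inner_prod_def inner_add_right algebra_simps)
qed

lemma Amap_jac_T_adjoint: "Amap_jac_T z \<xi> \<bullet> d = \<xi> \<bullet> (fst d, Amap_deriv z d)"
proof -
  obtain a1 a2 d1 d2 where \<xi>: "\<xi> = (a1, a2)" and d: "d = (d1, d2)" by fastforce
  define W where "W = Hi z *v G z"
  define u where "u = Hi z *v a2"
  have JAx_u: "JAx g z *v a2 = - (X z *v u) + ddir_y X z W *v u"
    unfolding JAx_def W_def u_def
    by (simp add: matrix_vector_mult_add_rdistrib matrix_vector_mult_diff_rdistrib
        uminus_matrix_vector_mult matrix_vector_mul_assoc)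
  have JAy_u: "JAy g z *v a2 = ddir_y H z W *v u"
    unfolding JAy_def W_def u_def by (simp add: matrix_vector_mul_assoc)
  have "d2 v* H z = H z *v d2"
    using transpose_matrix_vector[of "H z" d2] hess_yy_transpose[of z] by simp
  then have "Hi z *v (d2 v* H z) = d2" by simp
  then have Amap_deriv_eq: "Amap_deriv z (d1, d2) = - (Hi z *v (d1 v* X z)) + Hi z *v (D z (d1, d2) *v W)"
    unfolding Amap_deriv_def grad_y_deriv_def W_def by (simp add: matrix_vector_right_distrib)
  have Hi_adj: "a2 \<bullet> (Hi z *v v) = u \<bullet> v" for v
    using dot_lmul_matrix[of a2 "Hi z" v] transpose_matrix_vector[of "Hi z" a2] hess_yy_inv_transpose[of z]
    unfolding u_def by simp
  have D_split: "D z (d1, d2) = D z (d1, 0) + D z (0, d2)"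
    using linear_pair_split[OF bounded_linear.linear[OF blinfun.bounded_linear_right], of "D z" "(d1, d2)"]
    by simp
  have "\<xi> \<bullet> (fst d, Amap_deriv z d)
      = a1 \<bullet> d1 - u \<bullet> (d1 v* X z) + u \<bullet> (D z (d1, 0) *v W) + u \<bullet> (D z (0, d2) *v W)"
    unfolding \<xi> d fst_conv Amap_deriv_eq D_split
    by (simp add: inner_add_right inner_diff_right Hi_adj matrix_vector_mult_add_rdistrib
        matrix_vector_right_distrib)
  also have "u \<bullet> (d1 v* X z) = (X z *v u) \<bullet> d1"
    using dot_lmul_matrix[of d1 "X z" u] by (simp add: inner_commute)
  also note inner_hess_yy_deriv_fst
  also note inner_hess_yy_deriv_snd
  finally show ?thesis
    unfolding \<xi> d Amap_jac_T_def fst_conv snd_conv JAx_u JAy_u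
    by (simp add: inner_add_left inner_diff_left)
qed

lemma clarke_subdiff_hfun_subset:
  assumes lip: "M-lipschitz_on UNIV f"
  shows "clarke_subdiff (hfun f g \<beta>) z
    \<subseteq> (\<lambda>\<xi>. Amap_jac_T z \<xi> + penalty_grad \<beta> z) ` clarke_subdiff f (fst z, Amap g z)"
proof
  fix v assume v: "v \<in> clarke_subdiff (hfun f g \<beta>) z"
  have "v \<bullet> d \<le> clarke_dd_real f (fst z, Amap g z) (fst d, Amap_deriv z d) + penalty_grad \<beta> z \<bullet> d" for d
  proof -
    have "ereal (v \<bullet> d) \<le> clarke_dd (hfun f g \<beta>) z d"
      using v unfolding clarke_subdiff_def by blast
    also have "\<dots> \<le> ereal (clarke_dd_real f (fst z, Amap g z) (fst d, Amap_deriv z d) + penalty_grad \<beta> z \<bullet> d)"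
      using clarke_dd_hfun_le[OF lip, of \<beta> z d] by (simp add: clarke_dd_eq_ereal[OF lip] penalty_grad_inner)
    finally show ?thesis by simp
  qed
  then show "v \<in> (\<lambda>\<xi>. Amap_jac_T z \<xi> + penalty_grad \<beta> z) ` clarke_subdiff f (fst z, Amap g z)"
    unfolding clarke_subdiff_eq_minorants[OF lip]
    by (rule mem_adjoint_image_minorants[OF sublinear_clarke_dd_real[OF lip] clarke_dd_real_le_norm[OF lip]
          linear_Amap_jac_T Amap_jac_T_adjoint])
qed

lemma clarke_subdiff_hfun_supset:
  assumes lip: "M-lipschitz_on UNIV f" and reg: "clarke_regular_at f (fst z, Amap g z)"
  shows "(\<lambda>\<xi>. Amap_jac_T z \<xi> + penalty_grad \<beta> z) ` clarke_subdiff f (fst z, Amap g z)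
    \<subseteq> clarke_subdiff (hfun f g \<beta>) z"
proof
  fix v assume "v \<in> (\<lambda>\<xi>. Amap_jac_T z \<xi> + penalty_grad \<beta> z) ` clarke_subdiff f (fst z, Amap g z)"
  then obtain \<xi> where \<xi>: "\<xi> \<in> clarke_subdiff f (fst z, Amap g z)"
    and v: "v = Amap_jac_T z \<xi> + penalty_grad \<beta> z" by blast
  have "ereal ((Amap_jac_T z \<xi> + penalty_grad \<beta> z) \<bullet> d) \<le> clarke_dd (hfun f g \<beta>) z d" for d
  proof -
    have "(Amap_jac_T z \<xi> + penalty_grad \<beta> z) \<bullet> d = \<xi> \<bullet> (fst d, Amap_deriv z d) + \<beta> * (G z \<bullet> grad_y_deriv z d)"
      by (simp add: inner_add_left Amap_jac_T_adjoint penalty_grad_inner)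
    also have "ereal \<dots> \<le> clarke_dd f (fst z, Amap g z) (fst d, Amap_deriv z d) + ereal (\<beta> * (G z \<bullet> grad_y_deriv z d))"
      using \<xi> unfolding clarke_subdiff_def clarke_dd_eq_ereal[OF lip] by simp
    also have "\<dots> \<le> clarke_dd (hfun f g \<beta>) z d"
      by (rule clarke_dd_hfun_ge[OF lip reg])
    finally show ?thesis .
  qed
  then show "v \<in> clarke_subdiff (hfun f g \<beta>) z"
    unfolding v clarke_subdiff_def by blast
qed

end

theorem proposition3p1:
  fixes f g :: "(real^'n) \<times> (real^'p) \<Rightarrow> real"
    and Df :: "(real^'n) \<times> (real^'p) \<Rightarrow> ((real^'n) \<times> (real^'p)) set"
    and Mf \<mu> Lg Qg \<beta> :: real
    and x :: "real^'n" and y :: "real^'p"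
  assumes Mf_pos: "Mf > 0" and mu_pos: "\<mu> > 0" and Lg_pos: "Lg > 0" and Qg_pos: "Qg > 0"
    and f_lip: "\<forall>z w. \<bar>f z - f w\<bar> \<le> Mf * dist z w"
    and g_diff: "\<forall>z. g differentiable (at z)"
    and g_diff2: "\<forall>z. (\<lambda>w. (grad_x g w, grad_y g w)) differentiable (at z)"
    and hess_pd: "\<forall>z v. \<mu> * (norm v)\<^sup>2 \<le> v \<bullet> (hess_yy g z *v v)"
    and grad_lip: "\<forall>z w. dist (grad_x g z, grad_y g z) (grad_x g w, grad_y g w) \<le> Lg * dist z w"
    and hyy_lip: "\<forall>z w. dist (hess_yy g z) (hess_yy g w) \<le> Qg * dist z w"
    and hxy_lip: "\<forall>z w. dist (hess_xy g z) (hess_xy g w) \<le> Qg * dist z w"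
    and hyy_C1: "\<exists>D :: (real^'n) \<times> (real^'p) \<Rightarrow> ((real^'n) \<times> (real^'p)) \<Rightarrow>\<^sub>L (real^'p^'p).
                   (\<forall>z. (hess_yy g has_derivative blinfun_apply (D z)) (at z)) \<and> continuous_on UNIV D"
    and f_pot: "potential_of f Df"
    and Df_vals: "\<forall>z. compact (Df z) \<and> convex (Df z) \<and> (\<forall>v\<in>Df z. norm v \<le> Mf)"
    and beta_pos: "\<beta> > 0"
  shows "clarke_subdiff (hfun f g \<beta>) (x, y) \<subseteq>
           {(dx + JAx g (x, y) *v dy + \<beta> *\<^sub>R (hess_xy g (x, y) *v grad_y g (x, y)),
             JAy g (x, y) *v dy + \<beta> *\<^sub>R (hess_yy g (x, y) *v grad_y g (x, y))) | dx dy.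
              (dx, dy) \<in> clarke_subdiff f (x, Amap g (x, y))}
         \<and> (clarke_regular f \<longrightarrow>
            clarke_subdiff (hfun f g \<beta>) (x, y) =
           {(dx + JAx g (x, y) *v dy + \<beta> *\<^sub>R (hess_xy g (x, y) *v grad_y g (x, y)),
             JAy g (x, y) *v dy + \<beta> *\<^sub>R (hess_yy g (x, y) *v grad_y g (x, y))) | dx dy.
              (dx, dy) \<in> clarke_subdiff f (x, Amap g (x, y))})"
proof -
  obtain D where D: "\<forall>z. (hess_yy g has_derivative blinfun_apply (D z)) (at z)" "continuous_on UNIV D"
    using hyy_C1 by blast
  have grad_y_diff: "grad_y g differentiable (at z)" for z
  proof -
    obtain F' where "((\<lambda>w. (grad_x g w, grad_y g w)) has_derivative F') (at z)"
      using g_diff2 unfolding differentiable_def by blast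
    from has_derivative_snd[OF this] show ?thesis unfolding differentiable_def by auto
  qed
  have "Qg-lipschitz_on UNIV (hess_xy g)"
    using hxy_lip Qg_pos by (intro lipschitz_onI) auto
  then interpret lower_level g \<mu> D
    using mu_pos g_diff grad_y_diff hess_pd D by unfold_locales (auto intro: lipschitz_on_continuous_on)
  have lip: "Mf-lipschitz_on UNIV f"
    using f_lip Mf_pos by (intro lipschitz_onI) (auto simp: dist_real_def)
  have image_eq: "{(dx + JAx g (x, y) *v dy + \<beta> *\<^sub>R (hess_xy g (x, y) *v grad_y g (x, y)),
      JAy g (x, y) *v dy + \<beta> *\<^sub>R (hess_yy g (x, y) *v grad_y g (x, y))) | dx dy.
      (dx, dy) \<in> clarke_subdiff f (x, Amap g (x, y))}
    = (\<lambda>\<xi>. Amap_jac_T (x, y) \<xi> + penalty_grad \<beta> (x, y)) ` clarke_subdiff f (fst (x, y), Amap g (x, y))"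
    by (force simp: Amap_jac_T_def penalty_grad_def)
  show ?thesis
    using clarke_subdiff_hfun_subset[OF lip, of \<beta> "(x, y)"] clarke_subdiff_hfun_supset[OF lip, of "(x, y)" \<beta>]
    unfolding image_eq clarke_regular_def by blast
qed

end
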